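(* Let $K$ be an $(\mathbb{F}_q,\mathbb{Z})$-field and let $A_1,A_2\subseteq K^{k+1}$ be $\mathcal{L}_{\mathrm{dist}}$-cells with centers $c_1$, resp. $c_2$. Then $A_1\cap A_2$ can be written as a finite union of pairwise disjoint $\mathcal{L}_{\mathrm{dist}}$-cells, each having center $c_1$ or $c_2$.
   Context: Let $K$ be an $(\mathbb{F}_q,\mathbb{Z})$-field: a valued field with residue field isomorphic to $\mathbb{F}_q$ and value group elementarily equivalent to $\mathbb{Z}$. Notation: $\mathrm{ord}$ is the valuation ($\mathrm{ord}\,0=+\infty$), $\mathcal{M}_K$ the maximal ideal of the valuation ring, $\pi=\pi_K$ an element of smallest positive order; integers $\ell$ added to orders mean $\ell\cdot\mathrm{ord}\,\pi$. $P_n$ is the set of nonzero $n$-th powers; $\mathrm{ac}_m:K^\times\to(\mathcal{O}_K/\pi^m)^\times$ the unique homomorphism with $\mathrm{ac}_m(\pi)=1$, $\mathrm{ac}_m(u)\equiv u\bmod\pi^m$ for units $u$; $Q_{n,m}=\{x\in P_n(1+\mathcal{M}_K^m):\mathrm{ac}_m(x)=1\}$, $\lambda Q_{n,m}=\{\lambda t:t\in Q_{n,m}\}$ ($0\cdot Q_{n,m}=\{0\}$). $R_{n,m}(x,y,z)\Leftrightarrow y-x\in zQ_{n,m}$; $D^{(4)}(x,y,z,t)\Leftrightarrow\mathrm{ord}(x-y)<\mathrm{ord}(z-t)$; $\mathcal{L}_{\mathrm{dist}}=(D^{(4)},\{R_{n,m}\}_{n,m>0})$; definable means with parameters from $K$.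 An $\mathcal{L}_{\mathrm{dist}}$-polynomial in variables $x_1,\dots,x_k$ is a function of one of the forms $a$, $\pi^j(x_i-a)$, $\pi^j(x_i-x_{i'})$ with $a\in K$, $j\in\mathbb{Z}$, $1\le i,i'\le k$. Let $\Delta_{\mathrm{dist}}$ be the set of all such polynomials (for all $k$). An $(\mathcal{L}_{\mathrm{dist}},\Delta)$-precell in $K^k$ is a set defined by a Boolean combination of conditions $\mathrm{ord}\,a_1(x)<\mathrm{ord}\,a_2(x)+\ell$ ($a_i\in\Delta$ in $k$ variables, $\ell\in\mathbb{Z}$) and $b_1(x)-b_2(x)\in\lambda Q_{n,m}$ ($b_i$ quantifier-free definable functions, $\lambda\in K$). An $\mathcal{L}_{\mathrm{dist}}$-cell in $K^{k+1}$ is a set $\{(x,t)\in D\times K:\mathrm{ord}\,a_1(x)\ \square_1\ \mathrm{ord}(t-c(x))\ \square_2\ \mathrm{ord}\,a_2(x),\ t-c(x)\in\lambda Q_{n,m}\}$ with $D$ an $(\mathcal{L}_{\mathrm{dist}},\Delta_{\mathrm{dist}})$-precell, $\lambda\in K$, $a_1,a_2\in\Delta_{\mathrm{dist}}$, each $\square_i$ either $<$ or "no condition", and center $c(x)$ either a constant of $K$ or one of the variables $x_1,\dots,x_k$. *)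

theory Defs
  imports Main
begin

text \<open>A valued field is given by a field type 'k and a map v from 'k to an ordered
abelian group 'g, meant on nonzero elements; ord 0 = infinity is modelled by None.\<close>

definition valuation :: "('k::field \<Rightarrow> 'g::linordered_ab_group_add) \<Rightarrow> bool" where
  "valuation v \<longleftrightarrow>
     (\<forall>x y. x \<noteq> 0 \<longrightarrow> y \<noteq> 0 \<longrightarrow> v (x * y) = v x + v y) \<and>
     (\<forall>x y. x \<noteq> 0 \<longrightarrow> y \<noteq> 0 \<longrightarrow> x + y \<noteq> 0 \<longrightarrow> min (v x) (v y) \<le> v (x + y)) \<and>
     (\<forall>g. \<exists>x. x \<noteq> 0 \<and> v x = g)"

definition ordv :: "('k::field \<Rightarrow> 'g) \<Rightarrow> 'k \<Rightarrow> 'g option" where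
  "ordv v x = (if x = 0 then None else Some (v x))"

fun olt :: "'g::linorder option \<Rightarrow> 'g option \<Rightarrow> bool" where
  "olt (Some a) (Some b) = (a < b)"
| "olt (Some a) None = True"
| "olt None _ = False"

definition nsmul :: "nat \<Rightarrow> 'g::ab_group_add \<Rightarrow> 'g" where
  "nsmul n g = (\<Sum>i<n. g)"

text \<open>Z-groups: the models of the theory of (Z,+,<) (Presburger arithmetic).\<close>
definition Z_group :: "'g::linordered_ab_group_add itself \<Rightarrow> bool" where
  "Z_group _ \<longleftrightarrow> (\<exists>e::'g. 0 < e \<and> (\<forall>g. 0 < g \<longrightarrow> e \<le> g) \<and>
      (\<forall>n>0. \<forall>g. \<exists>h r. r < n \<and> g = nsmul n h + nsmul r e))"

definition val_ring :: "('k::field \<Rightarrow> 'g::linordered_ab_group_add) \<Rightarrow> 'k set" where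
  "val_ring v = {x. x = 0 \<or> 0 \<le> v x}"

definition max_ideal :: "('k::field \<Rightarrow> 'g::linordered_ab_group_add) \<Rightarrow> 'k set" where
  "max_ideal v = {x. x = 0 \<or> 0 < v x}"

text \<open>The residue field O/M, as the set of its cosets.\<close>
definition residue_field :: "('k::field \<Rightarrow> 'g::linordered_ab_group_add) \<Rightarrow> 'k set set" where
  "residue_field v = (\<lambda>x. {y \<in> val_ring v. y - x \<in> max_ideal v}) ` val_ring v"

text \<open>(F_q,Z)-field with a chosen uniformizer pi (element of smallest positive order).\<close>
definition FqZ_field :: "('k::field \<Rightarrow> 'g::linordered_ab_group_add) \<Rightarrow> 'k \<Rightarrow> nat \<Rightarrow> bool" where
  "FqZ_field v pi q \<longleftrightarrow> valuation v \<and> Z_group TYPE('g) \<and>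
     finite (residue_field v) \<and> card (residue_field v) = q \<and>
     pi \<noteq> 0 \<and> 0 < v pi \<and> (\<forall>x. x \<noteq> 0 \<longrightarrow> 0 < v x \<longrightarrow> v pi \<le> v x)"

definition Mpow :: "('k::field \<Rightarrow> 'g::linordered_ab_group_add) \<Rightarrow> 'k \<Rightarrow> nat \<Rightarrow> 'k set" where
  "Mpow v pi m = {x. x = 0 \<or> v (pi ^ m) \<le> v x}"

definition cls :: "('k::field \<Rightarrow> 'g::linordered_ab_group_add) \<Rightarrow> 'k \<Rightarrow> nat \<Rightarrow> 'k \<Rightarrow> 'k set" where
  "cls v pi m y = {z \<in> val_ring v. z - y \<in> Mpow v pi m}"

text \<open>f is a representative-valued version of a homomorphism K^x -> (O/pi^m)^x with
ac_m(pi) = 1 and ac_m(u) = u mod pi^m for units u.\<close>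
definition is_ac_rep :: "('k::field \<Rightarrow> 'g::linordered_ab_group_add) \<Rightarrow> 'k \<Rightarrow> nat \<Rightarrow> ('k \<Rightarrow> 'k) \<Rightarrow> bool" where
  "is_ac_rep v pi m f \<longleftrightarrow>
     (\<forall>x. x \<noteq> 0 \<longrightarrow> f x \<noteq> 0 \<and> v (f x) = 0) \<and>
     (\<forall>x y. x \<noteq> 0 \<longrightarrow> y \<noteq> 0 \<longrightarrow> f (x * y) - f x * f y \<in> Mpow v pi m) \<and>
     f pi - 1 \<in> Mpow v pi m \<and>
     (\<forall>u. u \<noteq> 0 \<longrightarrow> v u = 0 \<longrightarrow> f u - u \<in> Mpow v pi m)"

text \<open>ac_m : the unique such homomorphism, with values in O/pi^m (as classes); 0 maps to {}.\<close>
definition ac :: "('k::field \<Rightarrow> 'g::linordered_ab_group_add) \<Rightarrow> 'k \<Rightarrow> nat \<Rightarrow> 'k \<Rightarrow> 'k set" where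
  "ac v pi m = (THE h. h 0 = {} \<and>
       (\<exists>f. is_ac_rep v pi m f \<and> (\<forall>x. x \<noteq> 0 \<longrightarrow> h x = cls v pi m (f x))))"

definition PnM :: "('k::field \<Rightarrow> 'g::linordered_ab_group_add) \<Rightarrow> 'k \<Rightarrow> nat \<Rightarrow> nat \<Rightarrow> 'k set" where
  "PnM v pi n m = {y ^ n * (1 + z) | y z. y \<noteq> 0 \<and> z \<in> Mpow v pi m}"

definition Qnm :: "('k::field \<Rightarrow> 'g::linordered_ab_group_add) \<Rightarrow> 'k \<Rightarrow> nat \<Rightarrow> nat \<Rightarrow> 'k set" where
  "Qnm v pi n m = {x \<in> PnM v pi n m. ac v pi m x = cls v pi m 1}"

definition lamQ :: "('k::field \<Rightarrow> 'g::linordered_ab_group_add) \<Rightarrow> 'k \<Rightarrow> 'k \<Rightarrow> nat \<Rightarrow> nat \<Rightarrow> 'k set" where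
  "lamQ v pi lam n m = (\<lambda>t. lam * t) ` Qnm v pi n m"

text \<open>Points of K^N are lists of length N; terms are variables or parameters.\<close>
datatype 'k trm = TVar nat | TConst 'k

fun teval :: "'k list \<Rightarrow> 'k trm \<Rightarrow> 'k" where
  "teval x (TVar i) = x ! i"
| "teval x (TConst a) = a"

fun twf :: "nat \<Rightarrow> 'k trm \<Rightarrow> bool" where
  "twf N (TVar i) = (i < N)"
| "twf N (TConst a) = True"

inductive_set qf_preds :: "('k::field \<Rightarrow> 'g::linordered_ab_group_add) \<Rightarrow> 'k \<Rightarrow> nat \<Rightarrow> ('k list \<Rightarrow> bool) set"
  for v pi N where
  qf_eq: "twf N s \<Longrightarrow> twf N t \<Longrightarrow> (\<lambda>x. teval x s = teval x t) \<in> qf_preds v pi N"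
| qf_D: "twf N s1 \<Longrightarrow> twf N s2 \<Longrightarrow> twf N s3 \<Longrightarrow> twf N s4 \<Longrightarrow>
     (\<lambda>x. olt (ordv v (teval x s1 - teval x s2)) (ordv v (teval x s3 - teval x s4))) \<in> qf_preds v pi N"
| qf_R: "0 < n \<Longrightarrow> 0 < m \<Longrightarrow> twf N s1 \<Longrightarrow> twf N s2 \<Longrightarrow> twf N s3 \<Longrightarrow>
     (\<lambda>x. teval x s2 - teval x s1 \<in> lamQ v pi (teval x s3) n m) \<in> qf_preds v pi N"
| qf_neg: "P \<in> qf_preds v pi N \<Longrightarrow> (\<lambda>x. \<not> P x) \<in> qf_preds v pi N"
| qf_conj: "P \<in> qf_preds v pi N \<Longrightarrow> P' \<in> qf_preds v pi N \<Longrightarrow> (\<lambda>x. P x \<and> P' x) \<in> qf_preds v pi N"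

definition qf_def_fun :: "('k::field \<Rightarrow> 'g::linordered_ab_group_add) \<Rightarrow> 'k \<Rightarrow> nat \<Rightarrow> ('k list \<Rightarrow> 'k) \<Rightarrow> bool" where
  "qf_def_fun v pi k f \<longleftrightarrow> (\<exists>P \<in> qf_preds v pi (Suc k).
      \<forall>x y. length x = k \<longrightarrow> (P (x @ [y]) \<longleftrightarrow> y = f x))"

datatype 'k dpoly = PConst 'k | PVarC int nat 'k | PVarVar int nat nat

fun peval :: "'k::field \<Rightarrow> 'k list \<Rightarrow> 'k dpoly \<Rightarrow> 'k" where
  "peval pi x (PConst a) = a"
| "peval pi x (PVarC j i a) = pi powi j * (x ! i - a)"
| "peval pi x (PVarVar j i i') = pi powi j * (x ! i - x ! i')"

fun pwf :: "nat \<Rightarrow> 'k dpoly \<Rightarrow> bool" where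
  "pwf k (PConst a) = True"
| "pwf k (PVarC j i a) = (i < k)"
| "pwf k (PVarVar j i i') = (i < k \<and> i' < k)"

text \<open>Conditions defining (L_dist, Delta_dist)-precells in K^k.
  ord a1(x) < ord a2(x) + l is written as ord a1(x) < ord (pi^l a2(x)).\<close>
inductive_set precell_conds :: "('k::field \<Rightarrow> 'g::linordered_ab_group_add) \<Rightarrow> 'k \<Rightarrow> nat \<Rightarrow> ('k list \<Rightarrow> bool) set"
  for v pi k where
  pc_ord: "pwf k a1 \<Longrightarrow> pwf k a2 \<Longrightarrow>
     (\<lambda>x. olt (ordv v (peval pi x a1)) (ordv v (pi powi l * peval pi x a2))) \<in> precell_conds v pi k"
| pc_Q: "qf_def_fun v pi k b1 \<Longrightarrow> qf_def_fun v pi k b2 \<Longrightarrow> 0 < n \<Longrightarrow> 0 < m \<Longrightarrow>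
     (\<lambda>x. b1 x - b2 x \<in> lamQ v pi lam n m) \<in> precell_conds v pi k"
| pc_neg: "P \<in> precell_conds v pi k \<Longrightarrow> (\<lambda>x. \<not> P x) \<in> precell_conds v pi k"
| pc_conj: "P \<in> precell_conds v pi k \<Longrightarrow> P' \<in> precell_conds v pi k \<Longrightarrow> (\<lambda>x. P x \<and> P' x) \<in> precell_conds v pi k"

definition precell :: "('k::field \<Rightarrow> 'g::linordered_ab_group_add) \<Rightarrow> 'k \<Rightarrow> nat \<Rightarrow> 'k list set \<Rightarrow> bool" where
  "precell v pi k D \<longleftrightarrow> (\<exists>P \<in> precell_conds v pi k. D = {x. length x = k \<and> P x})"

text \<open>Centers: a constant of K or one of the variables x_1..x_k (0-indexed).\<close>
datatype 'k center = CConst 'k | CVar nat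

fun ceval :: "'k list \<Rightarrow> 'k center \<Rightarrow> 'k" where
  "ceval x (CConst a) = a"
| "ceval x (CVar i) = x ! i"

fun cwf :: "nat \<Rightarrow> 'k center \<Rightarrow> bool" where
  "cwf k (CConst a) = True"
| "cwf k (CVar i) = (i < k)"

text \<open>L_dist-cell in K^(k+1) with center c; points are pairs (x, t), x in K^k.
  a1, a2 = None means the corresponding condition is absent.\<close>
definition is_cell :: "('k::field \<Rightarrow> 'g::linordered_ab_group_add) \<Rightarrow> 'k \<Rightarrow> nat \<Rightarrow>
    ('k list \<times> 'k) set \<Rightarrow> 'k center \<Rightarrow> bool" where
  "is_cell v pi k A c \<longleftrightarrow> cwf k c \<and>
    (\<exists>D lam n m a1 a2. precell v pi k D \<and> 0 < n \<and> 0 < m \<and>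
       (\<forall>p. a1 = Some p \<longrightarrow> pwf k p) \<and> (\<forall>p. a2 = Some p \<longrightarrow> pwf k p) \<and>
       A = {(x, t). x \<in> D \<and>
              (case a1 of None \<Rightarrow> True
                 | Some p \<Rightarrow> olt (ordv v (peval pi x p)) (ordv v (t - ceval x c))) \<and>
              (case a2 of None \<Rightarrow> True
                 | Some p \<Rightarrow> olt (ordv v (t - ceval x c)) (ordv v (peval pi x p))) \<and>
              t - ceval x c \<in> lamQ v pi lam n m})"

end

theory Submission
  imports Defs
begin

(*
  We work with "generalised cells" (gen_cell) allowing
  finitely many bounds and coset conditions.  Since Q_{N,M} has finite index in K^x and its
  cosets refine those of every Q_{n,m} with n | N, m \<le> M, a generalised cell is a finite
  disjoint union of generalised cells with a single coset condition; splitting the precell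
  along comparisons between bounds then leaves at most one bound on each side, i.e. genuine
  cells (gen_cell_decomp).  For two cells put d(x) = c2(x) - c1(x) and cut the fibre over x
  into finitely many regions: d = 0, t close to c2, t close to c1, t far from both, and the
  middle annuli ord(t - c1) = ord d + j split by the Q_{1,M}-cosets of t - c1 and of d.  On
  each region both cell conditions can be rewritten relative to a single center, so the
  intersection with the region is a generalised cell (locale two_cells).
*)

lemma nsmul_0[simp]: "nsmul 0 g = 0"
  by (simp add: nsmul_def)

lemma nsmul_Suc: "nsmul (Suc n) g = g + nsmul n g"
  by (simp add: nsmul_def add.commute)

lemma nsmul_nonneg: "0 \<le> (g::'g::linordered_ab_group_add) \<Longrightarrow> 0 \<le> nsmul n g"
  by (induction n) (auto simp: nsmul_Suc)

lemma nsmul_nonpos: "(g::'g::linordered_ab_group_add) \<le> 0 \<Longrightarrow> nsmul n g \<le> 0"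
  by (induction n) (auto simp: nsmul_Suc add_nonpos_nonpos)

lemma nsmul_pos: "0 < (g::'g::linordered_ab_group_add) \<Longrightarrow> 0 < n \<Longrightarrow> 0 < nsmul n g"
  by (cases n) (auto simp: nsmul_Suc intro!: add_pos_nonneg nsmul_nonneg)

lemma nsmul_neg: "(g::'g::linordered_ab_group_add) < 0 \<Longrightarrow> 0 < n \<Longrightarrow> nsmul n g < 0"
  by (cases n) (auto simp: nsmul_Suc intro!: add_neg_nonpos nsmul_nonpos)

lemma nsmul_eq_0: "nsmul n (g::'g::linordered_ab_group_add) = 0 \<Longrightarrow> 0 < n \<Longrightarrow> g = 0"
  using nsmul_pos[of g n] nsmul_neg[of g n] by (cases "g < 0"; cases "0 < g") auto

lemma olt_trans: "olt a b \<Longrightarrow> olt b c \<Longrightarrow> olt a c"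
  by (cases a; cases b; cases c) auto

lemma olt_total: "\<not> olt a b \<Longrightarrow> a = b \<or> olt b (a::'g::linorder option)"
  by (cases a; cases b) auto

lemma olt_notle_trans: "\<not> olt a b \<Longrightarrow> olt a c \<Longrightarrow> olt b (c::'g::linorder option)"
  using olt_total[of a b] olt_trans[of b a c] by auto

lemma olt_notle_trans2: "\<not> olt a b \<Longrightarrow> olt c b \<Longrightarrow> olt c (a::'g::linorder option)"
  using olt_total[of a b] olt_trans[of c b a] by auto

section \<open>Valuation arithmetic in an (F_q, Z)-field\<close>

locale fqz =
  fixes v :: "'k::field \<Rightarrow> 'g::linordered_ab_group_add" and pi :: 'k and q :: nat
  assumes fqz: "FqZ_field v pi q"
begin

lemma vmult: "x \<noteq> 0 \<Longrightarrow> y \<noteq> 0 \<Longrightarrow> v (x * y) = v x + v y"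
  using fqz by (simp add: FqZ_field_def valuation_def)

lemma vadd_min: "x \<noteq> 0 \<Longrightarrow> y \<noteq> 0 \<Longrightarrow> x + y \<noteq> 0 \<Longrightarrow> min (v x) (v y) \<le> v (x + y)"
  using fqz by (simp add: FqZ_field_def valuation_def)

lemma vsurj: "\<exists>x. x \<noteq> 0 \<and> v x = g"
  using fqz by (simp add: FqZ_field_def valuation_def)

lemma pi_nz[simp]: "pi \<noteq> 0"
  using fqz by (simp add: FqZ_field_def)

lemma pi_pos: "0 < v pi"
  using fqz by (simp add: FqZ_field_def)

lemma pi_least: "0 < (g::'g) \<Longrightarrow> v pi \<le> g"
  using vsurj[of g] fqz by (auto simp: FqZ_field_def)

lemma v1: "v 1 = 0"
  using vmult[of 1 1] by simp

lemma vinv: "x \<noteq> 0 \<Longrightarrow> v (inverse x) = - v x"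
  using vmult[of x "inverse x"] v1 by (simp add: eq_neg_iff_add_eq_0 add.commute)

lemma vdiv: "x \<noteq> 0 \<Longrightarrow> y \<noteq> 0 \<Longrightarrow> v (x / y) = v x - v y"
  by (simp add: divide_inverse vmult vinv)

lemma vneg: "v (- x) = v x"
proof (cases "x = 0")
  case False
  have "v (-1) + v (-1) = 0"
    using vmult[of "-1" "-1"] v1 by simp
  hence "v (-1) = 0"
    by (metis add_neg_neg add_pos_pos less_irrefl linorder_neqE)
  thus ?thesis
    using vmult[of "-1" x] False by simp
qed simp

lemma vsub_min: "x \<noteq> 0 \<Longrightarrow> y \<noteq> 0 \<Longrightarrow> x - y \<noteq> 0 \<Longrightarrow> min (v x) (v y) \<le> v (x - y)"
  using vadd_min[of x "-y"] vneg[of y] by simp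

lemma vadd_strict:
  assumes "x \<noteq> 0" "v x < v y" shows "x + y \<noteq> 0 \<and> v (x + y) = v x"
proof (cases "y = 0")
  case False
  have ne: "x + y \<noteq> 0"
  proof
    assume "x + y = 0"
    then have "y = - x" by (simp add: eq_neg_iff_add_eq_0 add.commute)
    then show False using assms vneg by simp
  qed
  have "v x \<le> v (x + y)"
    using vadd_min[of x y] assms False ne by simp
  moreover have "min (v (x + y)) (v y) \<le> v x"
    using vsub_min[of "x + y" y] ne False assms by simp
  ultimately show ?thesis
    using assms ne by (auto simp: min_def split: if_splits)
qed (use assms in simp)

lemma vpow: "x \<noteq> 0 \<Longrightarrow> v (x ^ n) = nsmul n (v x)"
  by (induction n) (auto simp: nsmul_Suc v1 vmult)

lemma vpowi: "x \<noteq> 0 \<Longrightarrow> v (x powi (i + j)) = v (x powi i) + v (x powi j)"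
  by (simp add: power_int_add vmult)

lemma vpowi_Suc: "v (pi powi (i + 1)) = v (pi powi i) + v pi"
  using vpowi[OF pi_nz, of i 1] by simp

lemma vpowi_mono: "i < j \<Longrightarrow> v (pi powi i) < v (pi powi j)"
proof -
  assume "i < j"
  then obtain n where n: "j = i + int (Suc n)"
    by (metis less_imp_Suc_add zless_iff_Suc_zadd)
  have "0 < v (pi powi (int (Suc n)))"
  proof (induction n)
    case (Suc n)
    have "v (pi powi (int (Suc (Suc n)))) = v (pi powi (int (Suc n))) + v pi"
      using vpowi_Suc[of "int (Suc n)"] by (simp add: add.commute)
    thus ?case using Suc pi_pos by (simp add: add_pos_pos)
  qed (use pi_pos in simp)
  thus ?thesis using vpowi[OF pi_nz, of i "int (Suc n)"] n by simp
qed

lemma vpowi_mono_le: "i \<le> j \<Longrightarrow> v (pi powi i) \<le> v (pi powi j)"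
  using vpowi_mono by (cases "i = j") (auto intro: less_imp_le)

lemma vpowi_0: "v (pi powi 0) = 0"
  by (simp add: v1)

lemma no_value_between: "v (pi powi i) < g \<Longrightarrow> g < v (pi powi (i + 1)) \<Longrightarrow> False"
  using pi_least[of "g - v (pi powi i)"] vpowi_Suc[of i] by (auto simp: algebra_simps)

lemma disc_step: "v (pi powi i) < g \<Longrightarrow> v (pi powi (i + 1)) \<le> g"
  using no_value_between[of i g] by force

lemma disc_le: "g < v (pi powi (i + 1)) \<Longrightarrow> g \<le> v (pi powi i)"
  using disc_step[of i g] by force

lemma value_is_pi_power:
  assumes "v (pi powi a) \<le> g" "g < v (pi powi b)"
  shows "\<exists>i. a \<le> i \<and> i < b \<and> g = v (pi powi i)"
proof -
  have "a < b" using assms vpowi_mono_le[of b a] by force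
  then obtain n where n: "b = a + int (Suc n)"
    by (metis less_imp_Suc_add zless_iff_Suc_zadd)
  show ?thesis using assms n
  proof (induction n arbitrary: b)
    case 0
    then show ?case using no_value_between[of a g] by (cases "v (pi powi a) = g") force+
  next
    case (Suc n)
    show ?case
    proof (cases "g < v (pi powi (a + int (Suc n)))")
      case True
      from Suc.IH[OF Suc.prems(1) True] show ?thesis using Suc.prems by auto
    next
      case False
      have e: "a + int (Suc n) + 1 = b" using Suc.prems by simp
      have "g = v (pi powi (a + int (Suc n)))"
        using False Suc.prems(2) no_value_between[of "a + int (Suc n)" g] unfolding e by force
      thus ?thesis using Suc.prems by (intro exI[of _ "a + int (Suc n)"]) auto
    qed
  qed
qed

abbreviation MP where "MP m \<equiv> Mpow v pi m"
abbreviation VR where "VR \<equiv> val_ring v"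
definition unit :: "'k \<Rightarrow> bool" where "unit x \<longleftrightarrow> x \<noteq> 0 \<and> v x = 0"

lemma MP_iff: "x \<in> MP m \<longleftrightarrow> x = 0 \<or> v (pi powi int m) \<le> v x"
  by (simp add: Mpow_def)

lemma MP0: "0 \<in> MP m" by (simp add: MP_iff)
lemma O_iff: "x \<in> VR \<longleftrightarrow> x = 0 \<or> 0 \<le> v x" by (simp add: val_ring_def)
lemma O_MP0: "VR = MP 0" by (auto simp: O_iff MP_iff v1)

lemma MP_mono: "m' \<le> m \<Longrightarrow> x \<in> MP m \<Longrightarrow> x \<in> MP m'"
  using vpowi_mono_le[of "int m'" "int m"] by (auto simp: MP_iff)

lemma MP_O: "x \<in> MP m \<Longrightarrow> x \<in> VR"
  using MP_mono[of 0 m x] O_MP0 by auto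

lemma MP_neg: "x \<in> MP m \<Longrightarrow> - x \<in> MP m" by (auto simp: MP_iff vneg)

lemma MP_add: assumes "x \<in> MP m" "y \<in> MP m" shows "x + y \<in> MP m"
proof (cases "x = 0 \<or> y = 0 \<or> x + y = 0")
  case True thus ?thesis using assms MP0 by auto
next
  case False
  then show ?thesis using vadd_min[of x y] assms by (auto simp: MP_iff min_def split: if_splits)
qed

lemma MP_sub: "x \<in> MP m \<Longrightarrow> y \<in> MP m \<Longrightarrow> x - y \<in> MP m"
  using MP_add[of x m "- y"] MP_neg by simp

lemma MP_mult: assumes "x \<in> MP a" "y \<in> MP b" shows "x * y \<in> MP (a + b)"
proof (cases "x = 0 \<or> y = 0")
  case False
  have "v (pi powi int (a + b)) = v (pi powi int a) + v (pi powi int b)"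
    using vpowi[OF pi_nz, of "int a" "int b"] by simp
  thus ?thesis using assms False by (auto simp: MP_iff vmult intro: add_mono)
qed (auto simp: MP_iff)

lemma MP_multO: "x \<in> MP a \<Longrightarrow> y \<in> VR \<Longrightarrow> x * y \<in> MP a"
  using MP_mult[of x a y 0] O_MP0 by auto

lemma MP_multO': "x \<in> VR \<Longrightarrow> y \<in> MP a \<Longrightarrow> x * y \<in> MP a"
  using MP_multO[of y a x] by (simp add: mult.commute)

lemma O_mult: "x \<in> VR \<Longrightarrow> y \<in> VR \<Longrightarrow> x * y \<in> VR"
  using MP_mult[of x 0 y 0] O_MP0 by auto

lemma O_add: "x \<in> VR \<Longrightarrow> y \<in> VR \<Longrightarrow> x + y \<in> VR"
  using MP_add[of x 0 y] O_MP0 by auto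

lemma O_1: "1 \<in> VR" by (simp add: O_iff v1)
lemma pow_O: "x \<in> VR \<Longrightarrow> x ^ n \<in> VR" by (induction n) (auto intro: O_mult O_1)
lemma pi_pow_MP: "pi ^ m \<in> MP m" by (simp add: MP_iff)
lemma pi_O: "pi \<in> VR" using pi_pos by (simp add: O_iff less_imp_le)

lemma MP1_iff: "x \<in> MP 1 \<longleftrightarrow> x = 0 \<or> 0 < v x"
  using pi_least[of "v x"] pi_pos by (auto simp: MP_iff)

lemma unit_O: "unit x \<Longrightarrow> x \<in> VR" by (simp add: unit_def O_iff)
lemma unit_mult: "unit x \<Longrightarrow> unit y \<Longrightarrow> unit (x * y)" by (simp add: unit_def vmult)
lemma unit_inv: "unit x \<Longrightarrow> unit (inverse x)" by (simp add: unit_def vinv)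
lemma unit_pow: "unit x \<Longrightarrow> unit (x ^ n)" by (induction n) (auto simp: unit_def v1 vmult)
lemma unit_1: "unit 1" by (simp add: unit_def v1)

lemma MP_unit_cancel: assumes "unit w" "w * x \<in> MP m" shows "x \<in> MP m"
proof -
  have "inverse w * (w * x) \<in> MP m"
    using MP_multO'[OF unit_O[OF unit_inv[OF assms(1)]] assms(2)] .
  moreover have "inverse w * (w * x) = x" using assms(1) by (simp add: unit_def field_simps)
  ultimately show ?thesis by metis
qed

lemma one_plus_unit: assumes "z \<in> MP m" "0 < m" shows "unit (1 + z)"
proof (cases "z = 0")
  case False
  have "z \<in> MP 1" using assms MP_mono[of 1 m z] by simp
  hence "0 < v z" using False by (metis MP1_iff)
  hence "1 + z \<noteq> 0 \<and> v (1 + z) = v 1" using vadd_strict[of 1 z] v1 by simp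
  thus ?thesis using v1 by (simp add: unit_def)
qed (simp add: unit_1)

lemma residue_representatives: "\<exists>R. finite R \<and> R \<subseteq> VR \<and> (\<forall>x\<in>VR. \<exists>r\<in>R. x - r \<in> MP 1)"
proof -
  define cl where "cl x = {y \<in> VR. y - x \<in> max_ideal v}" for x
  have fin: "finite (cl ` VR)"
    using fqz by (simp add: FqZ_field_def residue_field_def cl_def)
  have mi: "max_ideal v = MP 1" unfolding max_ideal_def using MP1_iff by blast
  define rep where "rep C = (SOME x. x \<in> VR \<and> cl x = C)" for C
  have rep: "rep (cl x) \<in> VR \<and> cl (rep (cl x)) = cl x" if "x \<in> VR" for x
    unfolding rep_def by (rule someI[where x = x]) (use that in simp)
  show ?thesis
  proof (intro exI[of _ "rep ` cl ` VR"] conjI ballI)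
    show "finite (rep ` cl ` VR)" using fin by simp
    show "rep ` cl ` VR \<subseteq> VR" using rep by auto
    fix x assume x: "x \<in> VR"
    have "x \<in> cl (rep (cl x))" using x rep[OF x] MP0 by (simp add: cl_def mi)
    hence "x - rep (cl x) \<in> MP 1" by (simp add: cl_def mi)
    thus "\<exists>r\<in>rep ` cl ` VR. x - r \<in> MP 1" using x by blast
  qed
qed

text \<open>By \<open>\<pi>\<close>-adic expansion, \<open>O / M^m\<close> is finite for every \<open>m\<close>.\<close>
lemma residue_representatives_pow:
  "\<exists>R. finite R \<and> R \<subseteq> VR \<and> (\<forall>x\<in>VR. \<exists>r\<in>R. x - r \<in> MP m)"
proof (induction m)
  case 0
  show ?case by (intro exI[of _ "{0}"]) (auto simp: O_MP0 MP0)
next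
  case (Suc m)
  then obtain R where R: "finite R" "R \<subseteq> VR" "\<forall>x\<in>VR. \<exists>r\<in>R. x - r \<in> MP m" by blast
  obtain R1 where R1: "finite R1" "R1 \<subseteq> VR" "\<forall>x\<in>VR. \<exists>r\<in>R1. x - r \<in> MP 1"
    using residue_representatives by blast
  define R' where "R' = (\<lambda>(r, s). r + pi ^ m * s) ` (R \<times> R1)"
  show ?case
  proof (intro exI conjI ballI)
    show "finite R'" using R R1 by (simp add: R'_def)
    show "R' \<subseteq> VR" using R(2) R1(2) by (auto simp: R'_def intro!: O_add O_mult pow_O pi_O)
    fix x assume x: "x \<in> VR"
    obtain r where r: "r \<in> R" "x - r \<in> MP m" using R(3) x by blast
    define y where "y = (x - r) / pi ^ m"
    have xy: "x - r = pi ^ m * y" by (simp add: y_def)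
    have "y \<in> VR"
      using r by (cases "x = r") (auto simp: y_def O_iff MP_iff vdiv)
    then obtain s where s: "s \<in> R1" "y - s \<in> MP 1" using R1(3) by blast
    have "x - (r + pi ^ m * s) = pi ^ m * (y - s)" using xy by (simp add: algebra_simps)
    also have "\<dots> \<in> MP (m + 1)" using MP_mult[OF pi_pow_MP s(2)] .
    finally show "\<exists>r\<in>R'. x - r \<in> MP (Suc m)" using r s by (auto simp: R'_def)
  qed
qed

section \<open>The angular component maps \<open>ac_m\<close>\<close>

abbreviation congM where "congM m a b \<equiv> a - b \<in> MP m"

lemma congM_refl: "congM m a a" by (simp add: MP0)
lemma congM_sym: "congM m a b \<Longrightarrow> congM m b a" using MP_neg[of "a - b" m] by simp
lemma congM_trans: "congM m a b \<Longrightarrow> congM m b c \<Longrightarrow> congM m a c"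
  using MP_add[of "a - b" m "b - c"] by simp

lemma congM_mult:
  assumes "congM m a a'" "congM m b b'" "a \<in> VR" "b' \<in> VR" shows "congM m (a * b) (a' * b')"
proof -
  have "a * b - a' * b' = a * (b - b') + (a - a') * b'" by (simp add: algebra_simps)
  thus ?thesis using MP_add[OF MP_multO'[OF assms(3) assms(2)] MP_multO[OF assms(1) assms(4)]] by simp
qed

lemma congM_pow_mult: assumes "w \<in> VR" "congM m (w ^ a) 1" shows "congM m (w ^ (a * t)) 1"
proof (induction t)
  case (Suc t)
  have "congM m (w ^ a * w ^ (a * t)) (1 * 1)"
    using congM_mult[OF assms(2) Suc.IH pow_O[OF assms(1)] O_1] .
  thus ?case by (simp add: power_add)
qed (simp add: MP0)

lemma congM_pow1: "w \<in> VR \<Longrightarrow> congM m w 1 \<Longrightarrow> congM m (w ^ t) 1"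
  using congM_pow_mult[where a = 1] by simp

lemma congM_cancel: assumes "unit u" "congM m (u * c) u" shows "congM m c 1"
proof -
  have "u * (c - 1) \<in> MP m" using assms(2) by (simp add: algebra_simps)
  thus ?thesis by (rule MP_unit_cancel[OF assms(1)])
qed

lemma unit_congM: assumes "unit a" "congM m a b" "0 < m" shows "unit b"
proof -
  have "b - a \<in> MP m" using MP_neg[OF assms(2)] by simp
  hence "a + (b - a) = b" "unit (1 + (b - a) / a)"
    using one_plus_unit[of "(b - a) / a" m] assms(1,3)
    by (auto simp: divide_inverse intro: MP_multO unit_O unit_inv)
  moreover have "a + (b - a) = a * (1 + (b - a) / a)" using assms(1) by (simp add: unit_def field_simps)
  ultimately show ?thesis using unit_mult[OF assms(1)] by metis
qed

definition ac_exponent :: "nat \<Rightarrow> nat \<Rightarrow> bool" where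
  "ac_exponent m E \<longleftrightarrow> 0 < E \<and> (\<forall>w. unit w \<longrightarrow> congM m (w ^ E) 1)"

text \<open>Pigeonhole in the finite ring \<open>O / M^m\<close>: every unit has finite order at most \<open>|R|\<close>.\<close>
lemma unit_has_order:
  assumes R: "finite R" "\<forall>x\<in>VR. \<exists>r\<in>R. x - r \<in> MP m" and w: "unit w"
  shows "\<exists>a. 0 < a \<and> a \<le> card R \<and> congM m (w ^ a) 1"
proof -
  define \<rho> where "\<rho> i = (SOME r. r \<in> R \<and> w ^ i - r \<in> MP m)" for i :: nat
  have \<rho>: "\<rho> i \<in> R \<and> w ^ i - \<rho> i \<in> MP m" for i
    unfolding \<rho>_def using R(2) pow_O[OF unit_O[OF w], of i] by (metis (mono_tags, lifting) someI_ex)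
  have "\<not> inj_on \<rho> {0..card R}"
  proof
    assume "inj_on \<rho> {0..card R}"
    hence "card {0..card R} \<le> card R" using \<rho> R(1) by (intro card_inj_on_le) auto
    thus False by simp
  qed
  then obtain i j where ij: "i < j" "j \<le> card R" "\<rho> i = \<rho> j"
    unfolding inj_on_def by (metis atLeastAtMost_iff linorder_neqE_nat)
  have "w ^ i - w ^ j \<in> MP m" using MP_sub[OF conjunct2[OF \<rho>[of i]] conjunct2[OF \<rho>[of j]]] ij(3) by simp
  moreover have "w ^ j = w ^ i * w ^ (j - i)" using ij(1) by (simp flip: power_add)
  ultimately have "w ^ i * (1 - w ^ (j - i)) \<in> MP m" by (simp add: algebra_simps)
  hence "1 - w ^ (j - i) \<in> MP m" by (rule MP_unit_cancel[OF unit_pow[OF w]])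
  thus ?thesis using ij congM_sym by (intro exI[of _ "j - i"]) auto
qed

lemma ac_exponent_exists: "\<exists>E. ac_exponent m E"
proof -
  obtain R where R: "finite R" "\<forall>x\<in>VR. \<exists>r\<in>R. x - r \<in> MP m"
    using residue_representatives_pow[of m] by blast
  have "congM m (w ^ fact (card R)) 1" if w: "unit w" for w
  proof -
    obtain a where a: "0 < a" "a \<le> card R" "congM m (w ^ a) 1" using unit_has_order[OF R w] by blast
    have "a dvd fact (card R)" using a by (simp add: dvd_fact)
    then obtain t where "fact (card R) = a * t" by (auto elim: dvdE)
    thus ?thesis using congM_pow_mult[OF unit_O[OF w] a(3)] by simp
  qed
  thus ?thesis unfolding ac_exponent_def by (intro exI[of _ "fact (card R)"]) simp
qed

text \<open>Division with remainder in the value group, a Z-group with least positive element \<open>ord \<pi>\<close>.\<close>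
lemma value_division: "0 < E \<Longrightarrow> \<exists>h r. r < E \<and> g = nsmul E h + nsmul r (v pi)"
proof -
  assume E: "0 < E"
  obtain e0 :: 'g where e: "0 < e0" "\<forall>g. 0 < g \<longrightarrow> e0 \<le> g"
      "\<forall>n>0. \<forall>g. \<exists>h r. r < n \<and> g = nsmul n h + nsmul r e0"
    using fqz unfolding FqZ_field_def Z_group_def by blast
  have "e0 = v pi" using e(1,2) pi_pos pi_least[of e0] by (meson antisym)
  thus ?thesis using e(3) E by blast
qed

lemma unit_decomposition:
  assumes "x \<noteq> 0" "0 < E" shows "\<exists>r y u. r < E \<and> y \<noteq> 0 \<and> unit u \<and> x = pi ^ r * y ^ E * u"
proof -
  obtain h r where hr: "r < E" "v x = nsmul E h + nsmul r (v pi)" using value_division[OF assms(2)] by blast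
  obtain y where y: "y \<noteq> 0" "v y = h" using vsurj by blast
  define u where "u = x / (pi ^ r * y ^ E)"
  have nz: "pi ^ r * y ^ E \<noteq> 0" using y by simp
  have "v u = 0" using hr y nz assms by (simp add: u_def vdiv vmult vpow add.commute)
  moreover have "u \<noteq> 0" "x = pi ^ r * y ^ E * u" using assms nz by (simp_all add: u_def)
  ultimately show ?thesis using hr y by (auto simp: unit_def)
qed

lemma pi_power_times_power_not_unit:
  assumes z: "z \<noteq> 0" and r: "0 < r" "r < int E"
  shows "v (pi powi r * z ^ E) \<noteq> 0"
proof (cases "0 \<le> v z")
  case True
  have "0 < v (pi powi r)" using vpowi_mono[OF r(1)] vpowi_0 by simp
  hence "0 < v (pi powi r) + nsmul E (v z)" using nsmul_nonneg[OF True] by (rule add_pos_nonneg)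
  thus ?thesis using z by (simp add: vmult vpow)
next
  case False
  have "v pi \<le> - v z" using pi_least[of "- v z"] False by simp
  hence "v z + v pi \<le> v z + - v z" by (rule add_left_mono)
  hence vzpi: "v (z * pi) \<le> 0" using z by (simp add: vmult)
  have "pi powi r * z ^ E = pi powi (r - int E) * (z * pi) ^ E"
    by (simp add: power_mult_distrib power_int_diff field_simps)
  moreover have "v (pi powi (r - int E)) < 0" using vpowi_mono[of "r - int E" 0] r vpowi_0 by simp
  moreover have "v (pi powi (r - int E)) + nsmul E (v (z * pi)) < 0"
    using add_neg_nonpos[OF calculation(2) nsmul_nonpos[OF vzpi]] .
  ultimately show ?thesis using z by (simp add: vmult vpow)
qed

lemma pi_power_unit_dvd:
  assumes "y \<noteq> 0" "0 < E" "v (pi powi a * y ^ E) = 0" shows "int E dvd a"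
proof (rule ccontr)
  assume nd: "\<not> int E dvd a"
  define r where "r = a mod int E"
  have r: "0 < r" "r < int E" using nd assms(2) by (auto simp: r_def dvd_eq_mod_eq_0 order_le_neq_trans)
  have a: "a = r + int E * (a div int E)" by (simp add: r_def)
  have "pi powi a = pi powi r * (pi powi (a div int E)) ^ E"
    by (subst a, subst power_int_add) (simp_all add: mult.commute[of "int E"] power_int_mult)
  hence "pi powi a * y ^ E = pi powi r * (pi powi (a div int E) * y) ^ E" by (simp add: power_mult_distrib)
  thus False using pi_power_times_power_not_unit[OF _ r, of "pi powi (a div int E) * y"] assms by simp
qed

lemma unit_decomposition_unique:
  assumes E: "ac_exponent m E" and u: "unit u" "unit u'" and y: "y \<noteq> 0" "y' \<noteq> 0"
    and eq: "pi ^ r * y ^ E * u = pi ^ r' * y' ^ E * u'"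
  shows "congM m u u'"
proof -
  have E0: "0 < E" using E by (simp add: ac_exponent_def)
  have nz: "u \<noteq> 0" "u' \<noteq> 0" using u by (auto simp: unit_def)
  have "u / u' = (pi ^ r' * y' ^ E) / (pi ^ r * y ^ E)"
    using eq nz y by (simp add: frac_eq_eq ac_simps)
  also have "\<dots> = pi powi (int r' - int r) * (y' / y) ^ E"
    by (simp add: power_divide power_int_diff)
  finally have q: "u / u' = pi powi (int r' - int r) * (y' / y) ^ E" .
  have vq: "v (u / u') = 0" using u nz by (simp add: vdiv unit_def)
  hence "int E dvd (int r' - int r)" using pi_power_unit_dvd[of "y' / y" E] q y E0 by simp
  then obtain s where s: "int r' - int r = int E * s" by (auto elim: dvdE)
  define w where "w = pi powi s * (y' / y)"
  have "pi powi (int E * s) = (pi powi s) ^ E" by (simp add: mult.commute[of "int E"] power_int_mult)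
  hence q2: "u / u' = w ^ E" unfolding q s w_def by (simp only: power_mult_distrib)
  have wnz: "w \<noteq> 0" using y by (simp add: w_def)
  have "nsmul E (v w) = 0" using q2 vq vpow[OF wnz] by simp
  hence "unit w" using nsmul_eq_0 E0 wnz by (auto simp: unit_def)
  hence "congM m (u / u') 1" using E q2 by (simp add: ac_exponent_def)
  hence "u' * (u / u' - 1) \<in> MP m" using MP_multO'[OF unit_O[OF u(2)]] by blast
  thus ?thesis using nz by (simp add: algebra_simps)
qed

definition unit_decomp :: "nat \<Rightarrow> 'k \<Rightarrow> 'k \<Rightarrow> bool" where
  "unit_decomp E x u \<longleftrightarrow> (\<exists>r y. y \<noteq> 0 \<and> unit u \<and> x = pi ^ r * y ^ E * u)"

text \<open>A chosen unit part; it represents \<open>ac_m\<close> (see below).\<close>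
definition unit_part :: "nat \<Rightarrow> 'k \<Rightarrow> 'k" where
  "unit_part E x = (if x = 0 then 1 else SOME u. unit_decomp E x u)"

lemma unit_part_decomp: assumes "x \<noteq> 0" "0 < E" shows "unit_decomp E x (unit_part E x)"
proof -
  have "\<exists>u. unit_decomp E x u" using unit_decomposition[OF assms] by (auto simp: unit_decomp_def)
  thus ?thesis using assms(1) by (simp add: unit_part_def someI_ex)
qed

lemma unit_decomp_cong: "ac_exponent m E \<Longrightarrow> unit_decomp E x u \<Longrightarrow> unit_decomp E x u' \<Longrightarrow> congM m u u'"
  unfolding unit_decomp_def using unit_decomposition_unique by metis

lemma unit_part_ac_rep: assumes E: "ac_exponent m E" shows "is_ac_rep v pi m (unit_part E)"
proof -
  have d: "\<And>x. x \<noteq> 0 \<Longrightarrow> unit_decomp E x (unit_part E x)"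
    using unit_part_decomp E by (simp add: ac_exponent_def)
  have un: "\<And>x. x \<noteq> 0 \<Longrightarrow> unit (unit_part E x)" using d by (auto simp: unit_decomp_def)
  have mult: "congM m (unit_part E (x * y)) (unit_part E x * unit_part E y)"
    if xy: "x \<noteq> 0" "y \<noteq> 0" for x y
  proof -
    obtain r1 y1 where 1: "y1 \<noteq> 0" "x = pi ^ r1 * y1 ^ E * unit_part E x"
      using d[OF xy(1)] by (auto simp: unit_decomp_def)
    obtain r2 y2 where 2: "y2 \<noteq> 0" "y = pi ^ r2 * y2 ^ E * unit_part E y"
      using d[OF xy(2)] by (auto simp: unit_decomp_def)
    have "x * y = pi ^ (r1 + r2) * (y1 * y2) ^ E * (unit_part E x * unit_part E y)"
      by (subst 1(2), subst 2(2)) (simp add: power_add power_mult_distrib ac_simps)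
    hence "unit_decomp E (x * y) (unit_part E x * unit_part E y)"
      unfolding unit_decomp_def using 1(1) 2(1) unit_mult[OF un[OF xy(1)] un[OF xy(2)]]
      by (intro exI[of _ "r1 + r2"] exI[of _ "y1 * y2"]) simp
    thus ?thesis using unit_decomp_cong[OF E d] xy by simp
  qed
  have "unit_decomp E pi 1" using unit_1 by (auto simp: unit_decomp_def intro!: exI[of _ 1])
  hence "congM m (unit_part E pi) 1" using unit_decomp_cong[OF E d[OF pi_nz]] by simp
  moreover have "congM m (unit_part E u) u" if "unit u" for u
  proof -
    have "unit_decomp E u u" unfolding unit_decomp_def
      by (rule exI[of _ "0::nat"], rule exI[of _ "1::'k"]) (use that in simp)
    thus ?thesis using unit_decomp_cong[OF E d] that by (simp add: unit_def)
  qed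
  ultimately show ?thesis using un mult by (auto simp: is_ac_rep_def unit_def)
qed

lemma rep_unit: "is_ac_rep v pi m f \<Longrightarrow> x \<noteq> 0 \<Longrightarrow> unit (f x)"
  by (simp add: is_ac_rep_def unit_def)

lemma rep_val: "is_ac_rep v pi m f \<Longrightarrow> unit u \<Longrightarrow> congM m (f u) u"
  by (simp add: is_ac_rep_def unit_def)

lemma rep_mono: "is_ac_rep v pi M f \<Longrightarrow> m \<le> M \<Longrightarrow> is_ac_rep v pi m f"
  unfolding is_ac_rep_def using MP_mono by blast

lemma rep_mult: "is_ac_rep v pi m f \<Longrightarrow> x \<noteq> 0 \<Longrightarrow> y \<noteq> 0 \<Longrightarrow> congM m (f (x * y)) (f x * f y)"
  by (simp add: is_ac_rep_def)

lemma rep_mult_congM: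
  assumes f: "is_ac_rep v pi m f" and ab: "a \<noteq> 0" "b \<noteq> 0"
    and A: "congM m (f a) A" and B: "congM m (f b) B" "B \<in> VR"
  shows "congM m (f (a * b)) (A * B)"
  using congM_trans[OF rep_mult[OF f ab] congM_mult[OF A B(1) unit_O[OF rep_unit[OF f ab(1)]] B(2)]] .

lemma rep_pow: assumes f: "is_ac_rep v pi m f" and x: "x \<noteq> 0"
  shows "congM m (f (x ^ n)) (f x ^ n)"
proof (induction n)
  case 0 show ?case using rep_val[OF f unit_1] by simp
next
  case (Suc n)
  show ?case
    using rep_mult_congM[OF f x _ congM_refl Suc.IH pow_O[OF unit_O[OF rep_unit[OF f x]]]] x by simp
qed

lemma rep_pi_pow: assumes f: "is_ac_rep v pi m f" shows "congM m (f (pi ^ r)) 1"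
proof -
  have "congM m (f pi) 1" using f by (simp add: is_ac_rep_def)
  hence "congM m (f pi ^ r) 1" by (rule congM_pow1[OF unit_O[OF rep_unit[OF f pi_nz]]])
  thus ?thesis using congM_trans[OF rep_pow[OF f pi_nz]] by blast
qed

lemma rep_decomp:
  assumes f: "is_ac_rep v pi m f" and E: "ac_exponent m E" and y: "y \<noteq> 0" and u: "unit u"
  shows "congM m (f (pi ^ r * y ^ E * u)) u"
proof -
  have fy: "congM m (f (y ^ E)) 1"
    using congM_trans[OF rep_pow[OF f y]] E rep_unit[OF f y] by (simp add: ac_exponent_def)
  have nz: "pi ^ r * y ^ E \<noteq> 0" using y by simp
  have a: "congM m (f (pi ^ r * y ^ E)) (1 * 1)"
    using rep_mult_congM[OF f _ _ rep_pi_pow[OF f] fy O_1] y by simp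
  have "congM m (f (pi ^ r * y ^ E * u)) ((1 * 1) * u)"
    using rep_mult_congM[OF f nz _ a rep_val[OF f u] unit_O[OF u]] u by (simp add: unit_def)
  thus ?thesis by simp
qed

lemma rep_unique: assumes f: "is_ac_rep v pi m f" and g: "is_ac_rep v pi m g" and x: "x \<noteq> 0"
  shows "congM m (f x) (g x)"
proof -
  obtain E where E: "ac_exponent m E" using ac_exponent_exists by blast
  obtain r y u where d: "y \<noteq> 0" "unit u" "x = pi ^ r * y ^ E * u"
    using unit_decomposition[OF x, of E] E by (auto simp: ac_exponent_def)
  show ?thesis
    using congM_trans[OF rep_decomp[OF f E d(1,2)] congM_sym[OF rep_decomp[OF g E d(1,2)]]] d(3) by simp
qed

lemma cls_eq: "a \<in> VR \<Longrightarrow> b \<in> VR \<Longrightarrow> cls v pi m a = cls v pi m b \<longleftrightarrow> congM m a b"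
proof
  assume a: "a \<in> VR" "b \<in> VR" "cls v pi m a = cls v pi m b"
  have "a \<in> cls v pi m a" using a(1) MP0 by (simp add: cls_def)
  hence "a \<in> cls v pi m b" using a(3) by simp
  thus "congM m a b" by (simp add: cls_def)
next
  assume "a \<in> VR" "b \<in> VR" "congM m a b"
  thus "cls v pi m a = cls v pi m b" unfolding cls_def using congM_trans congM_sym by blast
qed

text \<open>Hence the description of \<open>ac_m\<close> by \<open>THE\<close> in its definition is meaningful.\<close>
lemma ac_characterisation:
  "\<exists>f. is_ac_rep v pi m f \<and> ac v pi m 0 = {} \<and> (\<forall>x. x \<noteq> 0 \<longrightarrow> ac v pi m x = cls v pi m (f x))"
proof -
  obtain E where E: "ac_exponent m E" using ac_exponent_exists by blast
  define f0 where "f0 = unit_part E"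
  have f0: "is_ac_rep v pi m f0" using unit_part_ac_rep[OF E] by (simp add: f0_def)
  define h0 where "h0 x = (if x = 0 then {} else cls v pi m (f0 x))" for x
  let ?P = "\<lambda>h. h 0 = {} \<and> (\<exists>f. is_ac_rep v pi m f \<and> (\<forall>x. x \<noteq> 0 \<longrightarrow> h x = cls v pi m (f x)))"
  have unique: "h = h0" if Ph: "?P h" for h
  proof
    fix x
    obtain g where g: "is_ac_rep v pi m g" "\<forall>x. x \<noteq> 0 \<longrightarrow> h x = cls v pi m (g x)" using Ph by blast
    show "h x = h0 x"
    proof (cases "x = 0")
      case False
      have "cls v pi m (g x) = cls v pi m (f0 x)"
        using cls_eq[OF unit_O[OF rep_unit[OF g(1) False]] unit_O[OF rep_unit[OF f0 False]]]
          rep_unique[OF g(1) f0 False] by simp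
      thus ?thesis using g False by (simp add: h0_def)
    qed (use Ph in \<open>simp add: h0_def\<close>)
  qed
  have "?P h0" using f0 by (auto simp: h0_def)
  hence "ac v pi m = h0" unfolding ac_def using the_equality[of ?P h0] unique by blast
  thus ?thesis using f0 by (auto simp: h0_def)
qed

definition acf :: "nat \<Rightarrow> 'k \<Rightarrow> 'k" where
  "acf m = (SOME f. is_ac_rep v pi m f \<and> ac v pi m 0 = {} \<and>
     (\<forall>x. x \<noteq> 0 \<longrightarrow> ac v pi m x = cls v pi m (f x)))"

lemma acf: "is_ac_rep v pi m (acf m) \<and> ac v pi m 0 = {} \<and>
    (\<forall>x. x \<noteq> 0 \<longrightarrow> ac v pi m x = cls v pi m (acf m x))"
  unfolding acf_def by (rule someI_ex[OF ac_characterisation])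

lemma acf_rep: "is_ac_rep v pi m (acf m)"
  using acf by (rule conjunct1)

section \<open>The groups \<open>Q_{n,m}\<close> and their cosets\<close>

abbreviation Q where "Q n m \<equiv> Qnm v pi n m"
abbreviation LQ where "LQ lam n m \<equiv> lamQ v pi lam n m"

lemma Q_iff: "x \<in> Q n m \<longleftrightarrow> x \<in> PnM v pi n m \<and> x \<noteq> 0 \<and> congM m (acf m x) 1"
proof (cases "x = 0")
  case True
  have "1 \<in> cls v pi m 1" using O_1 MP0 by (simp add: cls_def)
  thus ?thesis using acf True by (auto simp: Qnm_def)
next
  case False
  have "ac v pi m x = cls v pi m (acf m x)" using acf False by simp
  thus ?thesis using False cls_eq[OF unit_O[OF rep_unit[OF acf_rep[of m] False]] O_1] by (simp add: Qnm_def)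
qed

lemma PnM_I: "y \<noteq> 0 \<Longrightarrow> z \<in> MP m \<Longrightarrow> x = y ^ n * (1 + z) \<Longrightarrow> x \<in> PnM v pi n m"
  by (auto simp: PnM_def)

lemma PnM_E: "x \<in> PnM v pi n m \<Longrightarrow> (\<And>y z. y \<noteq> 0 \<Longrightarrow> z \<in> MP m \<Longrightarrow> x = y ^ n * (1 + z) \<Longrightarrow> P) \<Longrightarrow> P"
  by (auto simp: PnM_def)

lemma Q_nz: "x \<in> Q n m \<Longrightarrow> x \<noteq> 0" by (simp add: Q_iff)

lemma Q_power_times_one_plus:
  assumes w: "w \<noteq> 0" "congM m (acf m w) 1" and c: "congM m c 1" and m: "0 < m"
  shows "w ^ n * c \<in> Q n m"
proof -
  have uc: "unit c" using one_plus_unit[OF c m] by simp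
  have wn: "congM m (acf m (w ^ n)) 1"
    using congM_trans[OF rep_pow[OF acf_rep[of m] w(1)] congM_pow1[OF unit_O[OF rep_unit[OF acf_rep[of m] w(1)]] w(2)]] .
  have "congM m (acf m (w ^ n * c)) (1 * c)"
    using rep_mult_congM[OF acf_rep[of m] _ _ wn rep_val[OF acf_rep[of m] uc] unit_O[OF uc]] w uc by (simp add: unit_def)
  moreover have "w ^ n * c \<in> PnM v pi n m" using w c by (intro PnM_I[of w "c - 1"]) simp_all
  ultimately show ?thesis using w uc c congM_trans by (auto simp: Q_iff unit_def)
qed

lemma Q_1plus: "z \<in> MP m \<Longrightarrow> 0 < m \<Longrightarrow> 1 + z \<in> Q n m"
  using Q_power_times_one_plus[of 1 m "1 + z" n] rep_val[OF acf_rep[of m] unit_1] by simp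

lemma Q_one: "0 < m \<Longrightarrow> 1 \<in> Q n m"
  using Q_1plus[of 0 m n] MP0 by simp

lemma Q_mult: assumes "x \<in> Q n m" "y \<in> Q n m" "0 < m" shows "x * y \<in> Q n m"
proof -
  obtain a z where az: "a \<noteq> 0" "z \<in> MP m" "x = a ^ n * (1 + z)" using assms(1) by (auto simp: Q_iff elim: PnM_E)
  obtain b w where bw: "b \<noteq> 0" "w \<in> MP m" "y = b ^ n * (1 + w)" using assms(2) by (auto simp: Q_iff elim: PnM_E)
  have "x * y = (a * b) ^ n * (1 + (z + w + z * w))"
    unfolding az(3) bw(3) by (simp add: power_mult_distrib algebra_simps)
  moreover have "z + w + z * w \<in> MP m"
    using MP_add[OF MP_add[OF az(2) bw(2)] MP_multO[OF az(2) MP_O[OF bw(2)]]] .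
  ultimately have p: "x * y \<in> PnM v pi n m" using az bw by (intro PnM_I[of "a * b" "z + w + z * w"]) simp_all
  have nz: "x \<noteq> 0" "y \<noteq> 0" using assms by (auto simp: Q_iff)
  have "congM m (acf m (x * y)) (1 * 1)"
    using rep_mult_congM[OF acf_rep[of m] nz _ _ O_1] assms by (simp add: Q_iff)
  thus ?thesis using p nz by (simp add: Q_iff)
qed

lemma Q_inv: assumes "x \<in> Q n m" "0 < m" shows "inverse x \<in> Q n m"
proof -
  obtain a z where az: "a \<noteq> 0" "z \<in> MP m" "x = a ^ n * (1 + z)" using assms(1) by (auto simp: Q_iff elim: PnM_E)
  have u: "unit (1 + z)" using one_plus_unit[OF az(2) assms(2)] .
  define w where "w = - z / (1 + z)"
  have w: "inverse (1 + z) = 1 + w" using u by (simp add: w_def unit_def field_simps)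
  have "- z * inverse (1 + z) \<in> MP m" using MP_multO[OF MP_neg[OF az(2)] unit_O[OF unit_inv[OF u]]] .
  hence "w \<in> MP m" by (simp add: w_def divide_inverse)
  moreover have "inverse x = (inverse a) ^ n * (1 + w)" using az(3) w by (simp add: power_inverse)
  ultimately have p: "inverse x \<in> PnM v pi n m" using az(1) by (intro PnM_I[of "inverse a" w]) simp_all
  have nz: "x \<noteq> 0" using assms by (simp add: Q_iff)
  have ix: "inverse x \<noteq> 0" using nz by simp
  have fx: "congM m (acf m x) 1" using assms(1) by (simp add: Q_iff)
  have "congM m (acf m (x * inverse x)) (1 * acf m (inverse x))"
    using rep_mult_congM[OF acf_rep[of m] nz ix fx congM_refl unit_O[OF rep_unit[OF acf_rep[of m] ix]]] .
  hence "congM m (acf m 1) (acf m (inverse x))" using nz by simp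
  moreover have "congM m (acf m 1) 1" using rep_val[OF acf_rep[of m] unit_1] .
  ultimately have "congM m (acf m (inverse x)) 1" using congM_trans congM_sym by blast
  thus ?thesis using p ix by (simp add: Q_iff)
qed

lemma Q_div: "x \<in> Q n m \<Longrightarrow> y \<in> Q n m \<Longrightarrow> 0 < m \<Longrightarrow> x / y \<in> Q n m"
  using Q_mult[OF _ Q_inv] by (simp add: divide_inverse)

lemma Q_sub: assumes "n dvd N" "m \<le> M" "0 < m" "x \<in> Q N M" shows "x \<in> Q n m"
proof -
  obtain a z where az: "a \<noteq> 0" "z \<in> MP M" "x = a ^ N * (1 + z)" using assms(4) by (auto simp: Q_iff elim: PnM_E)
  obtain k where k: "N = n * k" using assms(1) by (auto elim: dvdE)
  have "x = (a ^ k) ^ n * (1 + z)" using az(3) k by (simp add: power_mult[symmetric] mult.commute)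
  hence p: "x \<in> PnM v pi n m" using az MP_mono[OF assms(2)] by (intro PnM_I[of "a ^ k" z]) simp_all
  have nz: "x \<noteq> 0" using assms(4) by (simp add: Q_iff)
  have "congM m (acf m x) (acf M x)" using rep_unique[OF acf_rep[of m] rep_mono[OF acf_rep[of M] assms(2)] nz] .
  moreover have "congM m (acf M x) 1" using assms(4) MP_mono[OF assms(2)] by (simp add: Q_iff)
  ultimately show ?thesis using p nz congM_trans by (auto simp: Q_iff)
qed

lemma Q_same_val: assumes "x \<in> Q N M" "y \<in> Q N M" "v x = v y" "0 < M" shows "congM M (x / y) 1"
proof -
  have q: "x / y \<in> Q N M" using Q_div[OF assms(1) assms(2) assms(4)] .
  have u: "unit (x / y)" using assms Q_nz by (simp add: unit_def vdiv)
  show ?thesis using congM_trans[OF congM_sym[OF rep_val[OF acf_rep[of M] u]]] q by (simp add: Q_iff)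
qed

lemma value_with_ac_one: "\<exists>w. w \<noteq> 0 \<and> v w = g \<and> congM M (acf M w) 1"
proof -
  let ?f = "acf M"
  obtain y where y: "y \<noteq> 0" "v y = g" using vsurj by blast
  have uy: "unit (?f y)" by (rule rep_unit[OF acf_rep[of M] y(1)])
  define w where "w = y / ?f y"
  have w: "w \<noteq> 0" "v w = g" "w * ?f y = y" using y uy by (auto simp: w_def vdiv unit_def)
  have "congM M (?f (w * ?f y)) (?f w * ?f y)"
    using rep_mult_congM[OF acf_rep[of M] w(1) _ congM_refl rep_val[OF acf_rep[of M] uy] unit_O[OF uy]] uy
    by (simp add: unit_def)
  hence "congM M (?f y * ?f w) (?f y)" using w(3) congM_sym by (simp add: mult.commute)
  thus ?thesis using w congM_cancel[OF uy] by blast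
qed

lemma Q_finite_index: assumes N: "0 < N" and M: "0 < M"
  shows "\<exists>S. finite S \<and> 0 \<notin> S \<and> (\<forall>x. x \<noteq> 0 \<longrightarrow> (\<exists>s\<in>S. x / s \<in> Q N M))"
proof -
  obtain R where R: "finite R" "\<forall>x\<in>VR. \<exists>r\<in>R. x - r \<in> MP M"
    using residue_representatives_pow[of M] by blast
  define S where "S = (\<lambda>(r, \<rho>). pi ^ r * \<rho>) ` ({..<N} \<times> (R - {0}))"
  let ?f = "acf M"
  have "\<exists>s\<in>S. x / s \<in> Q N M" if x: "x \<noteq> 0" for x
  proof -
    obtain h r where hr: "r < N" "v x = nsmul N h + nsmul r (v pi)" using value_division[OF N] by blast
    obtain w where w: "w \<noteq> 0" "v w = h" "congM M (?f w) 1" using value_with_ac_one by blast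
    have ux: "unit (?f x)" by (rule rep_unit[OF acf_rep[of M] x])
    obtain \<rho> where \<rho>: "\<rho> \<in> R" "?f x - \<rho> \<in> MP M" using R(2) unit_O[OF ux] by blast
    have u\<rho>: "unit \<rho>" using unit_congM[OF ux \<rho>(2) M] .
    define s where "s = pi ^ r * \<rho>"
    define c where "c = x / (s * w ^ N)"
    have swnz: "s * w ^ N \<noteq> 0" using w u\<rho> by (simp add: s_def unit_def)
    have "v (s * w ^ N) = v x"
      using hr w u\<rho> by (simp add: s_def vmult vpow unit_def algebra_simps)
    hence uc: "unit c" using x swnz by (simp add: c_def vdiv unit_def)
    have xs: "x / s = w ^ N * c" "x = s * w ^ N * c" using swnz by (simp_all add: c_def)
    have "congM M (?f (w ^ N)) 1"
      using congM_trans[OF rep_pow[OF acf_rep[of M] w(1)] congM_pow1[OF unit_O[OF rep_unit[OF acf_rep[of M] w(1)]] w(3)]] .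
    moreover have "congM M (?f s) (1 * \<rho>)"
      unfolding s_def using rep_mult_congM[OF acf_rep[of M] _ _ rep_pi_pow[OF acf_rep[of M]] rep_val[OF acf_rep[of M] u\<rho>] unit_O[OF u\<rho>]] u\<rho>
      by (simp add: unit_def)
    ultimately have "congM M (?f (s * w ^ N)) (\<rho> * 1)"
      using rep_mult_congM[OF acf_rep[of M] _ _ _ _ O_1] swnz by simp
    hence "congM M (?f x) (\<rho> * c)"
      using rep_mult_congM[OF acf_rep[of M] swnz _ _ rep_val[OF acf_rep[of M] uc] unit_O[OF uc]] uc xs(2)
      by (simp add: unit_def)
    hence "congM M (\<rho> * c) \<rho>" using congM_trans[OF congM_sym \<rho>(2)] by blast
    hence "congM M c 1" by (rule congM_cancel[OF u\<rho>])
    hence "x / s \<in> Q N M" unfolding xs(1) by (rule Q_power_times_one_plus[OF w(1) w(3) _ M])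
    moreover have "s \<in> S" using hr(1) \<rho> u\<rho> by (auto simp: S_def s_def unit_def)
    ultimately show ?thesis by blast
  qed
  moreover have "finite S" "0 \<notin> S" using R(1) by (auto simp: S_def)
  ultimately show ?thesis by blast
qed

lemma LQ_0: "0 < m \<Longrightarrow> LQ 0 n m = {0}"
  using Q_one[of m n] by (auto simp: lamQ_def)

lemma LQ_nz: assumes "lam \<noteq> 0" shows "y \<in> LQ lam n m \<longleftrightarrow> y / lam \<in> Q n m"
proof
  assume "y \<in> LQ lam n m"
  then obtain t where "t \<in> Q n m" "y = lam * t" by (auto simp: lamQ_def)
  thus "y / lam \<in> Q n m" using assms by simp
next
  assume "y / lam \<in> Q n m"
  moreover have "y = lam * (y / lam)" using assms by simp
  ultimately show "y \<in> LQ lam n m" unfolding lamQ_def by blast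
qed

lemma LQ_zero_mem: "0 < m \<Longrightarrow> 0 \<in> LQ lam n m \<longleftrightarrow> lam = 0"
  using LQ_0[of m n] LQ_nz[of lam 0 n m] Q_nz by fastforce

lemma LQ_nzD: "0 < m \<Longrightarrow> y \<in> LQ lam n m \<Longrightarrow> y \<noteq> 0 \<Longrightarrow> lam \<noteq> 0"
  using LQ_0 by auto

lemma LQ_transfer: assumes g: "g \<in> Q n m" and m: "0 < m"
  shows "y * g \<in> LQ lam n m \<longleftrightarrow> y \<in> LQ lam n m"
proof (cases "lam = 0")
  case True thus ?thesis using Q_nz[OF g] LQ_0[OF m] by simp
next
  case False
  have "y * g / lam = (y / lam) * g" "y / lam = (y * g / lam) / g" using Q_nz[OF g] by simp_all
  thus ?thesis using LQ_nz[OF False] Q_mult[OF _ g m] Q_div[OF _ g m] by metis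
qed

lemma LQ_scale: assumes "c \<noteq> 0" shows "c * y \<in> LQ (c * lam) n m \<longleftrightarrow> y \<in> LQ lam n m"
proof (cases "lam = 0")
  case True thus ?thesis using assms by (auto simp: lamQ_def)
next
  case False thus ?thesis using LQ_nz assms by simp
qed

lemma LQ_meet_ratio:
  assumes m: "0 < m" and t: "t \<in> LQ \<mu> n m" "t \<in> LQ \<mu>' n m" and nz: "\<mu> \<noteq> 0" "\<mu>' \<noteq> 0"
  shows "\<mu>' / \<mu> \<in> Q n m"
proof -
  have q: "t / \<mu> \<in> Q n m" "t / \<mu>' \<in> Q n m" using t nz LQ_nz by auto
  have "t \<noteq> 0" using Q_nz[OF q(1)] by auto
  have "(t / \<mu>) / (t / \<mu>') \<in> Q n m" by (rule Q_div[OF q m])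
  moreover have "(t / \<mu>) / (t / \<mu>') = \<mu>' / \<mu>" using nz \<open>t \<noteq> 0\<close> by simp
  ultimately show ?thesis by simp
qed

lemma Q_transversal: assumes N: "0 < N" and M: "0 < M"
  shows "\<exists>T. finite T \<and> 0 \<notin> T \<and> (\<forall>x. x \<noteq> 0 \<longrightarrow> (\<exists>\<tau>\<in>T. x / \<tau> \<in> Q N M)) \<and>
           (\<forall>\<tau>\<in>T. \<forall>\<tau>'\<in>T. \<tau>' / \<tau> \<in> Q N M \<longrightarrow> \<tau> = \<tau>')"
proof -
  obtain S where S: "finite S" "0 \<notin> S" "\<forall>x. x \<noteq> 0 \<longrightarrow> (\<exists>s\<in>S. x / s \<in> Q N M)"
    using Q_finite_index[OF N M] by blast
  define rel where "rel s s' \<longleftrightarrow> s' / s \<in> Q N M" for s s'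
  define canon where "canon s = (SOME s'. s' \<in> S \<and> rel s s')" for s
  have canon: "canon s \<in> S \<and> rel s (canon s)" if "s \<in> S" for s
    unfolding canon_def by (rule someI[where x = s]) (use that S(2) Q_one[OF M] in \<open>auto simp: rel_def\<close>)
  have canon_eq: "canon s1 = canon s2" if "s1 \<in> S" "s2 \<in> S" and q: "rel s1 s2" for s1 s2
  proof -
    have nz: "s1 \<noteq> 0" "s2 \<noteq> 0" using that S(2) by auto
    have "rel s1 s' \<longleftrightarrow> rel s2 s'" for s'
    proof
      assume "rel s1 s'"
      hence "(s' / s1) / (s2 / s1) \<in> Q N M" using q Q_div[OF _ _ M] unfolding rel_def by blast
      moreover have "(s' / s1) / (s2 / s1) = s' / s2" using nz by simp
      ultimately show "rel s2 s'" unfolding rel_def by metis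
    next
      assume "rel s2 s'"
      hence "(s' / s2) * (s2 / s1) \<in> Q N M" using q Q_mult[OF _ _ M] unfolding rel_def by blast
      moreover have "(s' / s2) * (s2 / s1) = s' / s1" using nz by simp
      ultimately show "rel s1 s'" unfolding rel_def by metis
    qed
    thus ?thesis by (simp add: canon_def)
  qed
  have cover: "\<exists>\<tau>\<in>canon ` S. x / \<tau> \<in> Q N M" if x: "x \<noteq> 0" for x
  proof -
    obtain s where s: "s \<in> S" "x / s \<in> Q N M" using S(3) x by blast
    have c: "canon s \<in> S" "canon s / s \<in> Q N M" using canon[OF s(1)] by (auto simp: rel_def)
    have "canon s \<noteq> 0" "s \<noteq> 0" using c(1) s(1) S(2) by auto
    hence "x / canon s = (x / s) / (canon s / s)" by simp
    thus ?thesis using Q_div[OF s(2) c(2) M] s(1) by (metis imageI)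
  qed
  have unique: "\<tau> = \<tau>'" if \<tau>: "\<tau> \<in> canon ` S" "\<tau>' \<in> canon ` S" "\<tau>' / \<tau> \<in> Q N M" for \<tau> \<tau>'
  proof -
    obtain s1 s2 where s: "s1 \<in> S" "\<tau> = canon s1" "s2 \<in> S" "\<tau>' = canon s2" using \<tau>(1,2) by blast
    have nz: "s1 \<noteq> 0" "s2 \<noteq> 0" "\<tau> \<noteq> 0" "\<tau>' \<noteq> 0"
      using s S(2) canon[OF s(1)] canon[OF s(3)] by auto
    have q: "\<tau> / s1 \<in> Q N M" "\<tau>' / s2 \<in> Q N M" using canon s by (auto simp: rel_def)
    have "(\<tau> / s1) * (\<tau>' / \<tau>) / (\<tau>' / s2) \<in> Q N M" by (rule Q_div[OF Q_mult[OF q(1) \<tau>(3) M] q(2) M])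
    moreover have "(\<tau> / s1) * (\<tau>' / \<tau>) / (\<tau>' / s2) = s2 / s1" using nz by simp
    ultimately have "rel s1 s2" by (simp add: rel_def)
    thus ?thesis using canon_eq s by simp
  qed
  have "0 \<notin> canon ` S" using S(2) canon by force
  thus ?thesis using S(1) cover unique by (intro exI[of _ "canon ` S"]) auto
qed

lemma Q_coset_partition: assumes N: "0 < N" and M: "0 < M"
  shows "\<exists>R. finite R \<and> (\<forall>t. \<exists>\<mu>\<in>R. t \<in> LQ \<mu> N M) \<and>
     (\<forall>\<mu>\<in>R. \<forall>\<mu>'\<in>R. \<mu> \<noteq> \<mu>' \<longrightarrow> LQ \<mu> N M \<inter> LQ \<mu>' N M = {})"
proof -
  obtain T where T: "finite T" "0 \<notin> T" "\<forall>x. x \<noteq> 0 \<longrightarrow> (\<exists>\<tau>\<in>T. x / \<tau> \<in> Q N M)"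
    "\<forall>\<tau>\<in>T. \<forall>\<tau>'\<in>T. \<tau>' / \<tau> \<in> Q N M \<longrightarrow> \<tau> = \<tau>'"
    using Q_transversal[OF N M] by blast
  have cov: "\<exists>\<mu>\<in>insert 0 T. t \<in> LQ \<mu> N M" for t
  proof (cases "t = 0")
    case False
    then obtain \<tau> where "\<tau> \<in> T" "t / \<tau> \<in> Q N M" using T(3) by blast
    thus ?thesis using LQ_nz T(2) by (metis insertCI)
  qed (use LQ_0[OF M] in auto)
  have disj: "LQ \<mu> N M \<inter> LQ \<mu>' N M = {}" if mu: "\<mu> \<in> insert 0 T" "\<mu>' \<in> insert 0 T" "\<mu> \<noteq> \<mu>'" for \<mu> \<mu>'
  proof (rule ccontr)
    assume "LQ \<mu> N M \<inter> LQ \<mu>' N M \<noteq> {}"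
    then obtain t where t: "t \<in> LQ \<mu> N M" "t \<in> LQ \<mu>' N M" by blast
    have "t \<noteq> 0"
    proof
      assume "t = 0"
      hence "\<mu> = 0" "\<mu>' = 0" using t LQ_zero_mem[OF M] by simp_all
      thus False using mu(3) by simp
    qed
    hence nz: "\<mu> \<noteq> 0" "\<mu>' \<noteq> 0" using t LQ_0[OF M] by auto
    hence "\<mu> \<in> T" "\<mu>' \<in> T" using mu(1,2) by auto
    thus False using T(4) LQ_meet_ratio[OF M t nz] mu(3) by blast
  qed
  show ?thesis using T(1) cov disj by (intro exI[of _ "insert 0 T"]) auto
qed

lemma Q_coset_refines: assumes "n dvd N" "m \<le> M" "0 < m"
  shows "LQ \<mu> N M \<subseteq> LQ lam n m \<or> LQ \<mu> N M \<inter> LQ lam n m = {}"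
proof (cases "LQ \<mu> N M \<inter> LQ lam n m = {} \<or> \<mu> = 0")
  case True thus ?thesis using LQ_0[of M N] assms(2,3) by auto
next
  case False
  have M: "0 < M" using assms by simp
  obtain y where y: "y \<in> LQ \<mu> N M" "y \<in> LQ lam n m" and mu: "\<mu> \<noteq> 0" using False by blast
  have ynz: "y \<noteq> 0" using y(1) mu LQ_zero_mem[OF M] by auto
  have lnz: "lam \<noteq> 0" using LQ_nzD[OF assms(3) y(2) ynz] .
  have q1: "y / \<mu> \<in> Q N M" using y(1) mu LQ_nz by simp
  have q2: "y / lam \<in> Q n m" using y(2) lnz LQ_nz by simp
  have "y' \<in> LQ lam n m" if y': "y' \<in> LQ \<mu> N M" for y'
  proof -
    have "y' / \<mu> \<in> Q N M" using y' mu LQ_nz by simp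
    hence "(y' / \<mu>) / (y / \<mu>) \<in> Q n m" by (rule Q_sub[OF assms Q_div[OF _ q1 M]])
    hence "((y' / \<mu>) / (y / \<mu>)) * (y / lam) \<in> Q n m" using Q_mult[OF _ q2 assms(3)] by blast
    moreover have "((y' / \<mu>) / (y / \<mu>)) * (y / lam) = y' / lam" using mu ynz by simp
    ultimately show "y' \<in> LQ lam n m" using LQ_nz lnz by simp
  qed
  thus ?thesis by blast
qed

section \<open>Precells and generalised cells\<close>

abbreviation ord where "ord x \<equiv> ordv v x"

lemma precell_cond:
  assumes "precell v pi k D" "P \<in> precell_conds v pi k" shows "precell v pi k (D \<inter> {x. P x})"
proof -
  obtain P' where "P' \<in> precell_conds v pi k" "D = {x. length x = k \<and> P' x}"
    using assms(1) by (auto simp: precell_def)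
  thus ?thesis using assms(2) unfolding precell_def
    by (intro bexI[of _ "\<lambda>x. P' x \<and> P x"]) (auto intro: precell_conds.pc_conj)
qed

lemma precell_ncond: "precell v pi k D \<Longrightarrow> P \<in> precell_conds v pi k \<Longrightarrow> precell v pi k (D \<inter> {x. \<not> P x})"
  by (rule precell_cond[OF _ precell_conds.pc_neg])

lemma precell_inter:
  assumes "precell v pi k D1" "precell v pi k D2" shows "precell v pi k (D1 \<inter> D2)"
proof -
  obtain P2 where "P2 \<in> precell_conds v pi k" "D2 = {x. length x = k \<and> P2 x}"
    using assms(2) by (auto simp: precell_def)
  moreover have "D1 \<inter> {x. P2 x} = D1 \<inter> {x. length x = k \<and> P2 x}"
    using assms(1) by (auto simp: precell_def)
  ultimately show ?thesis using precell_cond[OF assms(1)] by metis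
qed

lemma cond_ord: "pwf k a1 \<Longrightarrow> pwf k a2 \<Longrightarrow>
   (\<lambda>x. olt (ord (peval pi x a1)) (ord (peval pi x a2))) \<in> precell_conds v pi k"
  using precell_conds.pc_ord[of k a1 a2 v pi 0] by simp

lemma qf_center: assumes "cwf k c" shows "qf_def_fun v pi k (\<lambda>x. ceval x c)"
proof -
  define s where "s = (case c of CConst a \<Rightarrow> TConst a | CVar i \<Rightarrow> TVar i)"
  have "(\<lambda>x. teval x (TVar k) = teval x s) \<in> qf_preds v pi (Suc k)"
    using assms by (intro qf_preds.qf_eq) (cases c; auto simp: s_def)+
  moreover have "\<forall>x y. length x = k \<longrightarrow> (teval (x @ [y]) (TVar k) = teval (x @ [y]) s \<longleftrightarrow> y = ceval x c)"
    using assms by (cases c) (auto simp: nth_append s_def)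
  ultimately show ?thesis unfolding qf_def_fun_def by (intro bexI) auto
qed

lemma precell_Q: "precell v pi k D \<Longrightarrow> cwf k c \<Longrightarrow> cwf k c' \<Longrightarrow> 0 < n \<Longrightarrow> 0 < m \<Longrightarrow>
   precell v pi k (D \<inter> {x. ceval x c - ceval x c' \<in> LQ lam n m})"
  by (intro precell_cond precell_conds.pc_Q qf_center)

lemma precell_nQ: "precell v pi k D \<Longrightarrow> cwf k c \<Longrightarrow> cwf k c' \<Longrightarrow> 0 < n \<Longrightarrow> 0 < m \<Longrightarrow>
   precell v pi k (D \<inter> {x. \<not> ceval x c - ceval x c' \<in> LQ lam n m})"
  by (intro precell_ncond precell_conds.pc_Q qf_center)

text \<open>A generalised cell: finitely many lower bounds \<open>Ls\<close>, upper bounds \<open>Us\<close> and coset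
  conditions \<open>Ss\<close> (triples \<open>(\<lambda>, n, m)\<close>) on \<open>t - c(x)\<close>, over a set \<open>D\<close>.\<close>
definition gen_cell :: "'k center \<Rightarrow> 'k list set \<Rightarrow> 'k dpoly list \<Rightarrow> 'k dpoly list \<Rightarrow>
    ('k \<times> nat \<times> nat) list \<Rightarrow> ('k list \<times> 'k) set" where
  "gen_cell c D Ls Us Ss = {(x, t). x \<in> D \<and>
      (\<forall>p\<in>set Ls. olt (ord (peval pi x p)) (ord (t - ceval x c))) \<and>
      (\<forall>p\<in>set Us. olt (ord (t - ceval x c)) (ord (peval pi x p))) \<and>
      (\<forall>(lam, n, m)\<in>set Ss. t - ceval x c \<in> LQ lam n m)}"

lemma gen_cell_mem: "(x, t) \<in> gen_cell c D Ls Us Ss \<longleftrightarrow> x \<in> D \<and>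
      (\<forall>p\<in>set Ls. olt (ord (peval pi x p)) (ord (t - ceval x c))) \<and>
      (\<forall>p\<in>set Us. olt (ord (t - ceval x c)) (ord (peval pi x p))) \<and>
      (\<forall>(lam, n, m)\<in>set Ss. t - ceval x c \<in> LQ lam n m)"
  by (simp add: gen_cell_def)

definition gen_cell_ok where
  "gen_cell_ok k c D Ls Us Ss \<longleftrightarrow> cwf k c \<and> precell v pi k D \<and> (\<forall>p\<in>set Ls \<union> set Us. pwf k p) \<and>
     (\<forall>(lam, n, m)\<in>set Ss. 0 < n \<and> 0 < m)"

definition cell_decomp where
  "cell_decomp k cs A \<longleftrightarrow>
     (\<exists>F. finite F \<and> pairwise disjnt F \<and> \<Union>F = A \<and> (\<forall>C\<in>F. \<exists>c\<in>cs. is_cell v pi k C c))"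

lemma cell_decomp_mono: "cell_decomp k cs A \<Longrightarrow> cs \<subseteq> cs' \<Longrightarrow> cell_decomp k cs' A"
  unfolding cell_decomp_def by (metis subsetD)

lemma cell_decomp_empty: "cell_decomp k cs {}"
  unfolding cell_decomp_def by (intro exI[of _ "{}"]) simp

lemma cell_decomp_Union:
  assumes "finite I" "\<And>i. i \<in> I \<Longrightarrow> cell_decomp k cs (A i)"
    and "\<And>i j. i \<in> I \<Longrightarrow> j \<in> I \<Longrightarrow> i \<noteq> j \<Longrightarrow> A i \<inter> A j = {}"
  shows "cell_decomp k cs (\<Union>i\<in>I. A i)"
proof -
  have "\<forall>i\<in>I. \<exists>F. finite F \<and> pairwise disjnt F \<and> \<Union>F = A i \<and> (\<forall>C\<in>F. \<exists>c\<in>cs. is_cell v pi k C c)"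
    using assms(2) unfolding cell_decomp_def by simp
  then obtain F where F: "\<And>i. i \<in> I \<Longrightarrow> finite (F i) \<and> pairwise disjnt (F i) \<and> \<Union>(F i) = A i \<and>
      (\<forall>C\<in>F i. \<exists>c\<in>cs. is_cell v pi k C c)"
    by (metis bchoice)
  have "pairwise disjnt (\<Union>i\<in>I. F i)"
  proof (rule pairwiseI)
    fix C C' assume C: "C \<in> (\<Union>i\<in>I. F i)" "C' \<in> (\<Union>i\<in>I. F i)" "C \<noteq> C'"
    then obtain i j where ij: "i \<in> I" "j \<in> I" "C \<in> F i" "C' \<in> F j" by blast
    show "disjnt C C'"
    proof (cases "i = j")
      case True thus ?thesis using F[OF ij(1)] ij C(3) by (auto simp: pairwise_def)
    next
      case False
      have "C \<subseteq> A i" "C' \<subseteq> A j" using F ij by blast+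
      thus ?thesis using assms(3)[OF ij(1,2) False] by (auto simp: disjnt_def)
    qed
  qed
  moreover have "\<Union>(\<Union>i\<in>I. F i) = (\<Union>i\<in>I. \<Union>(F i))" by auto
  hence "\<Union>(\<Union>i\<in>I. F i) = (\<Union>i\<in>I. A i)" using F by (simp cong: SUP_cong)
  ultimately show ?thesis unfolding cell_decomp_def using assms(1) F
    by (intro exI[of _ "\<Union>i\<in>I. F i"]) auto
qed

lemma cell_decomp_Un:
  assumes "cell_decomp k cs A" "cell_decomp k cs B" "A \<inter> B = {}" shows "cell_decomp k cs (A \<union> B)"
proof -
  have "cell_decomp k cs (\<Union>i\<in>{True, False}. if i then A else B)"
    by (rule cell_decomp_Union) (use assms in auto)
  thus ?thesis by (simp add: Un_commute)
qed

lemma gen_cell_is_cell: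
  assumes ok: "gen_cell_ok k c D Ls Us [(\<mu>, N, M)]" and L: "length Ls \<le> 1" and U: "length Us \<le> 1"
  shows "is_cell v pi k (gen_cell c D Ls Us [(\<mu>, N, M)]) c"
proof -
  define a1 where "a1 = (case Ls of [] \<Rightarrow> None | p # _ \<Rightarrow> Some p)"
  define a2 where "a2 = (case Us of [] \<Rightarrow> None | p # _ \<Rightarrow> Some p)"
  have Ls: "Ls = [] \<or> (\<exists>p. Ls = [p])" using L by (cases Ls) auto
  have Us: "Us = [] \<or> (\<exists>p. Us = [p])" using U by (cases Us) auto
  show ?thesis unfolding is_cell_def
  proof (intro conjI exI)
    show "cwf k c" "precell v pi k D" "0 < N" "0 < M" using ok by (auto simp: gen_cell_ok_def)
    show "\<forall>p. a1 = Some p \<longrightarrow> pwf k p" "\<forall>p. a2 = Some p \<longrightarrow> pwf k p"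
      using Ls Us ok by (auto simp: a1_def a2_def gen_cell_ok_def)
    show "gen_cell c D Ls Us [(\<mu>, N, M)] = {(x, t). x \<in> D \<and>
          (case a1 of None \<Rightarrow> True | Some p \<Rightarrow> olt (ord (peval pi x p)) (ord (t - ceval x c))) \<and>
          (case a2 of None \<Rightarrow> True | Some p \<Rightarrow> olt (ord (t - ceval x c)) (ord (peval pi x p))) \<and>
          t - ceval x c \<in> LQ \<mu> N M}"
      using Ls Us by (elim disjE exE; simp add: gen_cell_def a1_def a2_def)
  qed
qed

lemma gen_cell_split_lower:
  fixes p p' :: "'k dpoly"
  defines "P \<equiv> \<lambda>x. olt (ord (peval pi x p)) (ord (peval pi x p'))"
  shows "gen_cell c D (p # p' # rest) Us S =
           gen_cell c (D \<inter> {x. P x}) (p' # rest) Us S \<union> gen_cell c (D \<inter> {x. \<not> P x}) (p # rest) Us S"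
  unfolding gen_cell_def P_def
  using olt_trans[of "ord (peval pi _ p)" "ord (peval pi _ p')"] olt_notle_trans
  by auto

lemma gen_cell_split_upper:
  fixes p p' :: "'k dpoly"
  defines "P \<equiv> \<lambda>x. olt (ord (peval pi x p)) (ord (peval pi x p'))"
  shows "gen_cell c D Ls (p # p' # rest) S =
           gen_cell c (D \<inter> {x. P x}) Ls (p # rest) S \<union> gen_cell c (D \<inter> {x. \<not> P x}) Ls (p' # rest) S"
  unfolding gen_cell_def P_def
  using olt_trans[of _ "ord (peval pi _ p)" "ord (peval pi _ p')"] olt_notle_trans2
  by auto

lemma gen_cell_split_disjoint:
  "gen_cell c (D \<inter> {x. P x}) Ls Us S \<inter> gen_cell c (D \<inter> {x. \<not> P x}) Ls' Us' S = {}"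
  by (auto simp: gen_cell_def)

lemma list_two_or_short: "(\<exists>p p' rest. xs = p # p' # rest) \<or> length xs \<le> 1"
  by (cases xs; cases "tl xs") auto

lemma gen_cell_single_coset_decomp:
  assumes "gen_cell_ok k c D Ls Us [(\<mu>, N, M)]"
  shows "cell_decomp k {c} (gen_cell c D Ls Us [(\<mu>, N, M)])"
  using assms
proof (induction "length Ls + length Us" arbitrary: D Ls Us rule: less_induct)
  case less
  let ?S = "[(\<mu>, N, M)]"
  have ok: "cwf k c" "precell v pi k D" "\<forall>p\<in>set Ls \<union> set Us. pwf k p" "0 < N" "0 < M"
    using less.prems by (auto simp: gen_cell_ok_def)
  have split: "cell_decomp k {c} (gen_cell c D Ls' Us' ?S)"
    if eq: "gen_cell c D Ls' Us' ?S =
              gen_cell c (D \<inter> {x. P x}) Ls1 Us1 ?S \<union> gen_cell c (D \<inter> {x. \<not> P x}) Ls2 Us2 ?S"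
      and P: "P \<in> precell_conds v pi k"
      and wf: "\<forall>p\<in>set Ls1 \<union> set Us1 \<union> set Ls2 \<union> set Us2. pwf k p"
      and len: "length Ls1 + length Us1 < length Ls + length Us"
               "length Ls2 + length Us2 < length Ls + length Us"
    for Ls' Us' P Ls1 Us1 Ls2 Us2
  proof -
    have "gen_cell_ok k c (D \<inter> {x. P x}) Ls1 Us1 ?S" "gen_cell_ok k c (D \<inter> {x. \<not> P x}) Ls2 Us2 ?S"
      using precell_cond[OF ok(2) P] precell_ncond[OF ok(2) P] ok wf unfolding gen_cell_ok_def by auto
    hence "cell_decomp k {c} (gen_cell c (D \<inter> {x. P x}) Ls1 Us1 ?S)"
      "cell_decomp k {c} (gen_cell c (D \<inter> {x. \<not> P x}) Ls2 Us2 ?S)"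
      using less.hyps[OF len(1)] less.hyps[OF len(2)] by blast+
    thus ?thesis unfolding eq by (rule cell_decomp_Un[OF _ _ gen_cell_split_disjoint])
  qed
  consider (L2) p p' rest where "Ls = p # p' # rest" | (U2) p p' rest where "Us = p # p' # rest"
    | (cell) "length Ls \<le> 1" "length Us \<le> 1"
    using list_two_or_short[of Ls] list_two_or_short[of Us] by blast
  thus ?case
  proof cases
    case L2
    have "(\<lambda>x. olt (ord (peval pi x p)) (ord (peval pi x p'))) \<in> precell_conds v pi k"
      using ok(3) L2 by (intro cond_ord) auto
    thus ?thesis unfolding L2 by (rule split[OF gen_cell_split_lower]) (use ok(3) L2 in auto)
  next
    case U2
    have "(\<lambda>x. olt (ord (peval pi x p)) (ord (peval pi x p'))) \<in> precell_conds v pi k"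
      using ok(3) U2 by (intro cond_ord) auto
    thus ?thesis unfolding U2 by (rule split[OF gen_cell_split_upper]) (use ok(3) U2 in auto)
  next
    case cell
    thus ?thesis using gen_cell_is_cell[OF less.prems] unfolding cell_decomp_def
      by (intro exI[of _ "{gen_cell c D Ls Us ?S}"]) auto
  qed
qed

lemma dvd_prod_list_mem: "(x::nat) \<in> set xs \<Longrightarrow> x dvd prod_list xs"
  by (induction xs) auto

lemma common_refinement:
  fixes Ss :: "('a \<times> nat \<times> nat) list"
  assumes "\<forall>(lam, n, m)\<in>set Ss. 0 < n \<and> 0 < m"
  shows "\<exists>N M. 0 < N \<and> 0 < M \<and> (\<forall>(l, n, m)\<in>set Ss. n dvd N \<and> m \<le> M)"
proof (intro exI conjI)
  let ?N = "prod_list (map (\<lambda>(l, n, m). n) Ss)" and ?M = "sum_list (map (\<lambda>(l, n, m). m) Ss) + 1"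
  have "0 \<notin> set (map (\<lambda>(l, n, m). n) Ss)" using assms by force
  hence "?N \<noteq> 0" by (simp add: prod_list_zero_iff)
  thus "0 < ?N" by simp
  show "0 < ?M" by simp
  show "\<forall>(l, n, m)\<in>set Ss. n dvd ?N \<and> m \<le> ?M"
  proof (clarify, intro conjI)
    fix l n m assume lnm: "(l, n, m) \<in> set Ss"
    show "n dvd ?N" using lnm by (intro dvd_prod_list_mem) force
    have "m \<le> sum_list (map (\<lambda>(l, n, m). m) Ss)" by (intro member_le_sum_list) (use lnm in force)+
    thus "m \<le> ?M" by simp
  qed
qed

lemma gen_cell_decomp: assumes "gen_cell_ok k c D Ls Us Ss" shows "cell_decomp k {c} (gen_cell c D Ls Us Ss)"
proof -
  have S: "\<forall>(lam, n, m)\<in>set Ss. 0 < n \<and> 0 < m" using assms by (auto simp: gen_cell_ok_def)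
  then obtain N M where N0: "0 < N" and M0: "0 < M" and finer: "\<forall>(l, n, m)\<in>set Ss. n dvd N \<and> m \<le> M"
    using common_refinement by blast
  obtain R where R: "finite R" "\<forall>t. \<exists>\<mu>\<in>R. t \<in> LQ \<mu> N M"
    "\<forall>\<mu>\<in>R. \<forall>\<mu>'\<in>R. \<mu> \<noteq> \<mu>' \<longrightarrow> LQ \<mu> N M \<inter> LQ \<mu>' N M = {}"
    using Q_coset_partition[OF N0 M0] by blast
  define R' where "R' = {\<mu>\<in>R. \<forall>(l, n, m)\<in>set Ss. LQ \<mu> N M \<subseteq> LQ l n m}"
  have "(\<forall>(l, n, m)\<in>set Ss. y \<in> LQ l n m) \<longleftrightarrow> (\<exists>\<mu>\<in>R'. y \<in> LQ \<mu> N M)" for y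
  proof
    assume a: "\<forall>(l, n, m)\<in>set Ss. y \<in> LQ l n m"
    obtain \<mu> where \<mu>: "\<mu> \<in> R" "y \<in> LQ \<mu> N M" using R(2) by blast
    have "LQ \<mu> N M \<subseteq> LQ l n m" if lnm: "(l, n, m) \<in> set Ss" for l n m
    proof -
      have "n dvd N" "m \<le> M" "0 < m" using S finer lnm by auto
      thus ?thesis using Q_coset_refines[of n N m M \<mu> l] a \<mu>(2) lnm by blast
    qed
    hence "\<forall>(l, n, m)\<in>set Ss. LQ \<mu> N M \<subseteq> LQ l n m" by auto
    thus "\<exists>\<mu>\<in>R'. y \<in> LQ \<mu> N M" using \<mu> by (auto simp: R'_def)
  qed (auto simp: R'_def)
  hence eq: "gen_cell c D Ls Us Ss = (\<Union>\<mu>\<in>R'. gen_cell c D Ls Us [(\<mu>, N, M)])"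
    unfolding gen_cell_def by auto
  show ?thesis unfolding eq
  proof (rule cell_decomp_Union)
    show "finite R'" using R(1) by (simp add: R'_def)
    show "cell_decomp k {c} (gen_cell c D Ls Us [(\<mu>, N, M)])" for \<mu>
      using assms N0 M0 by (intro gen_cell_single_coset_decomp) (simp add: gen_cell_ok_def)
    show "gen_cell c D Ls Us [(\<mu>, N, M)] \<inter> gen_cell c D Ls Us [(\<mu>', N, M)] = {}"
      if "\<mu> \<in> R'" "\<mu>' \<in> R'" "\<mu> \<noteq> \<mu>'" for \<mu> \<mu>'
      using R(3) that by (auto simp: R'_def gen_cell_def)
  qed
qed

lemma cell_is_gen_cell:
  assumes "is_cell v pi k A c"
  shows "\<exists>D L U l n m. gen_cell_ok k c D L U [(l, n, m)] \<and> A = gen_cell c D L U [(l, n, m)]"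
proof -
  obtain D lam n m a1 a2 where h: "cwf k c" "precell v pi k D" "0 < n" "0 < m"
    "\<forall>p. a1 = Some p \<longrightarrow> pwf k p" "\<forall>p. a2 = Some p \<longrightarrow> pwf k p"
    "A = {(x, t). x \<in> D \<and>
              (case a1 of None \<Rightarrow> True | Some p \<Rightarrow> olt (ord (peval pi x p)) (ord (t - ceval x c))) \<and>
              (case a2 of None \<Rightarrow> True | Some p \<Rightarrow> olt (ord (t - ceval x c)) (ord (peval pi x p))) \<and>
              t - ceval x c \<in> LQ lam n m}"
    using assms unfolding is_cell_def by blast
  define L where "L = (case a1 of None \<Rightarrow> [] | Some p \<Rightarrow> [p])"
  define U where "U = (case a2 of None \<Rightarrow> [] | Some p \<Rightarrow> [p])"
  have "gen_cell_ok k c D L U [(lam, n, m)]"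
    using h by (cases a1; cases a2) (auto simp: gen_cell_ok_def L_def U_def)
  moreover have "A = gen_cell c D L U [(lam, n, m)]"
    unfolding h(7) gen_cell_def L_def U_def by (cases a1; cases a2) auto
  ultimately show ?thesis by blast
qed

end

section \<open>Geometry of two centers\<close>

text \<open>The L_dist-polynomial \<open>\<pi>^j (c(x) - c'(x))\<close> (up to sign, which does not affect the order).\<close>
fun diff_poly :: "int \<Rightarrow> 'k::field \<Rightarrow> 'k center \<Rightarrow> 'k center \<Rightarrow> 'k dpoly" where
  "diff_poly j p (CConst a) (CConst b) = PConst (p powi j * (a - b))"
| "diff_poly j p (CVar i) (CConst b) = PVarC j i b"
| "diff_poly j p (CConst a) (CVar i) = PVarC j i a"
| "diff_poly j p (CVar i) (CVar i') = PVarVar j i i'"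

lemma diff_poly_wf: "cwf k c \<Longrightarrow> cwf k c' \<Longrightarrow> pwf k (diff_poly j p c c')"
  by (cases c; cases c') auto

context fqz begin

lemma diff_poly_ord: "ord (peval pi x (diff_poly j pi c c')) = ord (pi powi j * (ceval x c - ceval x c'))"
proof (cases c; cases c')
  fix a i assume "c = CConst a" "c' = CVar i"
  moreover have "pi powi j * (x ! i - a) = - (pi powi j * (a - x ! i))" by (simp add: algebra_simps)
  ultimately show ?thesis by (simp add: ordv_def vneg)
qed auto

lemma ord_nz: "y \<noteq> 0 \<Longrightarrow> ord y = Some (v y)" by (simp add: ordv_def)
lemma ord_0: "ord 0 = None" by (simp add: ordv_def)
lemma ord_neg: "ord (- y) = ord y" by (simp add: ordv_def vneg)

lemma v_pd: "d \<noteq> 0 \<Longrightarrow> v (pi powi a * d) = v (pi powi a) + v d"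
  using vmult[of "pi powi a" d] pi_nz by simp

lemma pd_nz_iff[simp]: "pi powi a * d = 0 \<longleftrightarrow> d = 0" using pi_nz by simp

lemma v_pd_mono: "d \<noteq> 0 \<Longrightarrow> a \<le> b \<Longrightarrow> v (pi powi a * d) \<le> v (pi powi b * d)"
  using vpowi_mono_le[of a b] by (simp add: v_pd)

lemma MP_int: "z \<noteq> 0 \<Longrightarrow> v (pi powi int m) \<le> v z \<Longrightarrow> z \<in> MP m"
  by (simp add: MP_iff)

text \<open>Let \<open>d = c2 - c1\<close> and \<open>w = t - c2\<close>.  If \<open>ord w > ord d + m - 1\<close> then \<open>t - c1 = w + d\<close>
  lies in \<open>d (1 + M^m)\<close>: it has the order and the \<open>Q_{n,m}\<close>-coset of \<open>d\<close>.\<close>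
lemma near2: assumes d: "d \<noteq> 0" and m: "0 < m" and Near2: "olt (ord (pi powi (int m - 1) * d)) (ord w)"
  shows "ord (w + d) = ord d \<and> (w + d \<in> LQ l n m \<longleftrightarrow> d \<in> LQ l n m)"
proof (cases "w = 0")
  case True thus ?thesis by simp
next
  case False
  have lt: "v (pi powi (int m - 1)) + v d < v w" using Near2 False d by (simp add: ord_nz v_pd)
  define z where "z = w / d"
  have znz: "z \<noteq> 0" using False d by (simp add: z_def)
  have "v z = v w - v d" using False d by (simp add: z_def vdiv)
  moreover have "v (pi powi (int m - 1)) < v w - v d" using lt by (simp add: less_diff_eq)
  ultimately have "v (pi powi (int m - 1)) < v z" by simp
  hence "v (pi powi (int m - 1 + 1)) \<le> v z" by (rule disc_step)
  hence zm: "z \<in> MP m" using znz by (intro MP_int) simp_all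
  have wd: "w + d = d * (1 + z)" using d by (simp add: z_def algebra_simps)
  have u: "unit (1 + z)" by (rule one_plus_unit[OF zm m])
  have "ord (w + d) = ord d" using u d unfolding wd by (simp add: ord_nz vmult unit_def)
  moreover have "w + d \<in> LQ l n m \<longleftrightarrow> d \<in> LQ l n m"
    unfolding wd by (rule LQ_transfer[OF Q_1plus[OF zm m] m])
  ultimately show ?thesis by simp
qed

lemma ord_pd_neg: "ord (pi powi a * (- d)) = ord (pi powi a * d)"
  using ord_neg[of "pi powi a * d"] by simp

lemma near1: assumes d: "d \<noteq> 0" and m: "0 < m" and Near1: "olt (ord (pi powi (int m - 1) * d)) (ord u)"
  shows "ord (u - d) = ord d \<and> (u - d \<in> LQ l n m \<longleftrightarrow> - d \<in> LQ l n m)"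
  using near2[of "- d" m u l n] d m Near1 by (simp add: ord_pd_neg ord_neg)

lemma far: assumes d: "d \<noteq> 0" and m: "0 < m" and F: "olt (ord u) (ord (pi powi (1 - int m) * d))"
  shows "ord (u - d) = ord u \<and> (u - d \<in> LQ l n m \<longleftrightarrow> u \<in> LQ l n m)"
proof -
  have unz: "u \<noteq> 0" using F by (auto simp: ordv_def)
  have lt: "v u < v (pi powi (- int m + 1)) + v d" using F unz d by (simp add: ord_nz v_pd)
  define z where "z = - d / u"
  have znz: "z \<noteq> 0" using unz d by (simp add: z_def)
  have "v z = v d - v u" using unz d by (simp add: z_def vdiv vneg)
  moreover have "v u - v d < v (pi powi (- int m + 1))" using lt by (simp add: algebra_simps)
  hence "v u - v d \<le> v (pi powi (- int m))" by (rule disc_le)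
  moreover have "v (pi powi (- int m)) = - v (pi powi int m)"
    using pi_nz by (simp add: power_int_minus vinv)
  ultimately have "v u - v d \<le> - v (pi powi int m)" by simp
  hence "v (pi powi int m) \<le> - (v u - v d)" by (simp only: le_minus_iff)
  hence "v (pi powi int m) \<le> v z" using \<open>v z = v d - v u\<close> by simp
  hence zm: "z \<in> MP m" using znz by (intro MP_int)
  have ud: "u - d = u * (1 + z)" using unz by (simp add: z_def algebra_simps)
  have un: "unit (1 + z)" by (rule one_plus_unit[OF zm m])
  have "ord (u - d) = ord u" using un unz unfolding ud by (simp add: ord_nz vmult unit_def)
  moreover have "u - d \<in> LQ l n m \<longleftrightarrow> u \<in> LQ l n m"
    unfolding ud by (rule LQ_transfer[OF Q_1plus[OF zm m] m])
  ultimately show ?thesis by simp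
qed

lemma near1_near2_disjoint: assumes d: "d \<noteq> 0" "0 < m1" "0 < m2"
  and Near1: "olt (ord (pi powi (int m2 - 1) * d)) (ord u)"
  and Near2: "olt (ord (pi powi (int m1 - 1) * d)) (ord (u - d))" shows False
proof -
  have "ord (u - d) = ord d" using near1[OF d(1) d(3) Near1] by simp
  hence "v (pi powi (int m1 - 1) * d) < v d" using Near2 d by (simp add: ord_nz)
  moreover have "v (pi powi 0 * d) \<le> v (pi powi (int m1 - 1) * d)" using v_pd_mono[OF d(1), of 0 "int m1 - 1"] d(2) by simp
  ultimately show False by simp
qed

lemma far_near2_disjoint: assumes d: "d \<noteq> 0" "0 < m1" "0 < m2"
  and F: "olt (ord u) (ord (pi powi (1 - int m2) * d))"
  and Near2: "olt (ord (pi powi (int m1 - 1) * d)) (ord (u - d))" shows False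
proof -
  have e: "ord (u - d) = ord u" using far[OF d(1) d(3) F] by simp
  have unz: "u \<noteq> 0" using F by (auto simp: ordv_def)
  have a: "v u < v (pi powi (1 - int m2) * d)" using F unz d by (simp add: ord_nz)
  have b: "v (pi powi (int m1 - 1) * d) < v u" using Near2 e unz d by (simp add: ord_nz)
  have "v (pi powi (1 - int m2) * d) \<le> v (pi powi (int m1 - 1) * d)" using v_pd_mono[OF d(1)] d by simp
  thus False using a b by simp
qed

lemma far_near1_disjoint: assumes d: "d \<noteq> 0" "0 < m2"
  and F: "olt (ord u) (ord (pi powi (1 - int m2) * d))"
  and Near1: "olt (ord (pi powi (int m2 - 1) * d)) (ord u)" shows False
proof -
  have unz: "u \<noteq> 0" using F by (auto simp: ordv_def)
  have a: "v u < v (pi powi (1 - int m2) * d)" using F unz d by (simp add: ord_nz)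
  have b: "v (pi powi (int m2 - 1) * d) < v u" using Near1 unz d by (simp add: ord_nz)
  have "v (pi powi (1 - int m2) * d) \<le> v (pi powi (int m2 - 1) * d)" using v_pd_mono[OF d(1)] d by simp
  thus False using a b by simp
qed

text \<open>The annulus \<open>ord u = ord d + j\<close>, described by strict inequalities so that it is a cell condition.\<close>
definition slice where
  "slice j d u \<longleftrightarrow> olt (ord (pi powi (j - 1) * d)) (ord u) \<and> olt (ord u) (ord (pi powi (j + 1) * d))"

lemma slice_iff: assumes d: "d \<noteq> 0" shows "slice j d u \<longleftrightarrow> u \<noteq> 0 \<and> v u = v (pi powi j * d)"
proof
  assume s: "slice j d u"
  have unz: "u \<noteq> 0" using s by (auto simp: slice_def ordv_def)
  have a: "v (pi powi (j - 1)) + v d < v u" "v u < v (pi powi (j + 1)) + v d"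
    using s unz d by (auto simp: slice_def ord_nz v_pd)
  have "v (pi powi (j - 1 + 1)) \<le> v u - v d" using disc_step[of "j - 1" "v u - v d"] a(1) by (simp add: algebra_simps)
  moreover have "v u - v d \<le> v (pi powi j)" using disc_le[of "v u - v d" j] a(2) by (simp add: algebra_simps)
  ultimately have "v u - v d = v (pi powi j)" by simp
  hence "v u = v (pi powi j) + v d" by (simp add: diff_eq_eq)
  thus "u \<noteq> 0 \<and> v u = v (pi powi j * d)" using unz d v_pd[OF d, of j] by simp
next
  assume a: "u \<noteq> 0 \<and> v u = v (pi powi j * d)"
  have "v (pi powi (j - 1)) < v (pi powi j)" "v (pi powi j) < v (pi powi (j + 1))" using vpowi_mono by auto
  thus "slice j d u" using a d by (simp add: slice_def ord_nz v_pd)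
qed

lemma slice_near1_disjoint: assumes "d \<noteq> 0" "j \<le> int m2 - 1" "slice j d u" "olt (ord (pi powi (int m2 - 1) * d)) (ord u)" shows False
proof -
  have "u \<noteq> 0" "v u = v (pi powi j * d)" using slice_iff assms by auto
  moreover have "v (pi powi j * d) \<le> v (pi powi (int m2 - 1) * d)" using v_pd_mono assms by simp
  ultimately show False using assms(4) assms(1) by (simp add: ord_nz)
qed

lemma slice_far_disjoint: assumes "d \<noteq> 0" "1 - int m2 \<le> j" "slice j d u" "olt (ord u) (ord (pi powi (1 - int m2) * d))" shows False
proof -
  have "u \<noteq> 0" "v u = v (pi powi j * d)" using slice_iff assms by auto
  moreover have "v (pi powi (1 - int m2) * d) \<le> v (pi powi j * d)" using v_pd_mono assms by simp
  ultimately show False using assms(4) assms(1) by (simp add: ord_nz)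
qed

lemma slice_unique: "d \<noteq> 0 \<Longrightarrow> slice j d u \<Longrightarrow> slice j' d u \<Longrightarrow> j = j'"
  using slice_iff[of d] vpowi_mono[of j j'] vpowi_mono[of j' j] v_pd[of d]
  by (cases "j < j'"; cases "j' < j") auto

lemma slice_cover: assumes d: "d \<noteq> 0" and m2: "0 < m2"
  and nN1: "\<not> olt (ord (pi powi (int m2 - 1) * d)) (ord u)"
  and nF: "\<not> olt (ord u) (ord (pi powi (1 - int m2) * d))"
  shows "\<exists>j. 1 - int m2 \<le> j \<and> j \<le> int m2 - 1 \<and> slice j d u"
proof -
  have unz: "u \<noteq> 0" using nN1 d by (auto simp: ordv_def)
  have a: "v u \<le> v (pi powi (int m2 - 1)) + v d" using nN1 unz d by (simp add: ord_nz v_pd)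
  have b: "v (pi powi (1 - int m2)) + v d \<le> v u" using nF unz d by (simp add: ord_nz v_pd)
  have "v (pi powi (int m2 - 1)) < v (pi powi (int m2 - 1 + 1))" using vpowi_mono[of "int m2 - 1" "int m2 - 1 + 1"] by linarith
  hence "v u < v (pi powi (int m2 - 1 + 1)) + v d" using a by (meson add_strict_right_mono le_less_trans)
  hence a': "v u - v d < v (pi powi (int m2 - 1 + 1))" by (simp only: diff_less_eq)
  have b': "v (pi powi (1 - int m2)) \<le> v u - v d" using b by (simp add: algebra_simps)
  obtain j where j: "1 - int m2 \<le> j" "j < int m2 - 1 + 1" "v u - v d = v (pi powi j)"
    using value_is_pi_power[OF b' a'] by blast
  have "v u = v (pi powi j) + v d" using j(3) by (simp add: diff_eq_eq)
  hence "slice j d u" using slice_iff[OF d] unz v_pd[OF d, of j] by simp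
  thus ?thesis using j by (intro exI[of _ j]) simp
qed

lemma v_mult_bound: assumes "x \<noteq> 0" "y \<noteq> 0" "v (pi powi a) \<le> v x" "v (pi powi b) \<le> v y"
  shows "v (pi powi (a + b)) \<le> v (x * y)"
  using add_mono[OF assms(3,4)] vpowi[OF pi_nz, of a b] vmult[OF assms(1,2)] by simp

lemma MP_of_bound: "v (pi powi a) \<le> v x \<Longrightarrow> int m \<le> a \<Longrightarrow> x \<in> MP m"
  using vpowi_mono_le[of "int m" a] by (auto simp: MP_iff)

lemma MP_bound: "x \<in> MP m \<Longrightarrow> x \<noteq> 0 \<Longrightarrow> v (pi powi int m) \<le> v x"
  by (simp add: MP_iff)

lemma theta_const:
  assumes M: "0 < M"
    and G: "d \<noteq> 0" "slice j d u" "u \<in> LQ \<mu> 1 M" "d \<in> LQ \<nu> 1 M"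
    and G0: "d0 \<noteq> 0" "slice j d0 u0" "u0 \<in> LQ \<mu> 1 M" "d0 \<in> LQ \<nu> 1 M"
  shows "congM M ((u / d) / (u0 / d0)) 1"
proof -
  have su: "u \<noteq> 0" "v u = v (pi powi j * d)" using slice_iff[OF G(1)] G(2) by auto
  have su0: "u0 \<noteq> 0" "v u0 = v (pi powi j * d0)" using slice_iff[OF G0(1)] G0(2) by auto
  have \<mu>: "\<mu> \<noteq> 0" using LQ_nzD[OF M G(3) su(1)] .
  have \<nu>: "\<nu> \<noteq> 0" using LQ_nzD[OF M G(4) G(1)] .
  have q1: "u / u0 \<in> Q 1 M"
  proof -
    have a: "u / \<mu> \<in> Q 1 M" "u0 / \<mu> \<in> Q 1 M" using G(3) G0(3) \<mu> LQ_nz by auto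
    have "(u / \<mu>) / (u0 / \<mu>) \<in> Q 1 M" by (rule Q_div[OF a M])
    moreover have "(u / \<mu>) / (u0 / \<mu>) = u / u0" using \<mu> su0 by simp
    ultimately show ?thesis by metis
  qed
  have q2: "d / d0 \<in> Q 1 M"
  proof -
    have a: "d / \<nu> \<in> Q 1 M" "d0 / \<nu> \<in> Q 1 M" using G(4) G0(4) \<nu> LQ_nz by auto
    have "(d / \<nu>) / (d0 / \<nu>) \<in> Q 1 M" by (rule Q_div[OF a M])
    moreover have "(d / \<nu>) / (d0 / \<nu>) = d / d0" using \<nu> G0(1) by simp
    ultimately show ?thesis by metis
  qed
  have "v (u / u0) = v (d / d0)"
    using su su0 G(1) G0(1) by (simp add: vdiv v_pd)
  hence "congM M ((u / u0) / (d / d0)) 1" by (rule Q_same_val[OF q1 q2 _ M])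
  moreover have "(u / u0) / (d / d0) = (u / d) / (u0 / d0)" using G(1) G0(1) su su0 by simp
  ultimately show ?thesis by metis
qed

lemma ud_decomp: assumes th: "\<theta> \<noteq> 0" and d: "d \<noteq> 0" and c: "congM M ((u / d) / \<theta>) 1"
  shows "\<exists>\<epsilon>. \<epsilon> \<in> MP M \<and> u - d = d * ((\<theta> - 1) + \<theta> * \<epsilon>)"
proof -
  define \<epsilon> where "\<epsilon> = (u / d) / \<theta> - 1"
  have "u - d = d * ((\<theta> - 1) + \<theta> * \<epsilon>)" using th d by (simp add: \<epsilon>_def field_simps)
  thus ?thesis using c by (intro exI[of _ \<epsilon>]) (simp add: \<epsilon>_def)
qed

lemma middle_theta_near_one:
  assumes m: "0 < m1" "0 < m2" and Mfine: "M = 2 * (m1 + m2)"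
    and th: "\<theta> \<noteq> 0" "v \<theta> = v (pi powi j)" "1 - int m2 \<le> j"
    and near: "\<theta> = 1 \<or> v (pi powi int m1) \<le> v (\<theta> - 1)"
    and d: "d \<noteq> 0" and c: "congM M ((u / d) / \<theta>) 1"
  shows "olt (ord (pi powi (int m1 - 1) * d)) (ord (u - d))"
proof -
  obtain \<epsilon> where e: "\<epsilon> \<in> MP M" "u - d = d * ((\<theta> - 1) + \<theta> * \<epsilon>)" using ud_decomp[OF th(1) d c] by blast
  have t1: "\<theta> - 1 \<in> MP m1" using near by (auto simp: MP_iff)
  have t2: "\<theta> * \<epsilon> \<in> MP m1"
  proof (cases "\<epsilon> = 0")
    case True thus ?thesis by (simp add: MP0)
  next
    case False
    have "v (pi powi (j + int M)) \<le> v (\<theta> * \<epsilon>)"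
      using v_mult_bound[OF th(1) False _ MP_bound[OF e(1) False]] th(2) by simp
    thus ?thesis by (rule MP_of_bound) (use th(3) Mfine in simp)
  qed
  have X: "(\<theta> - 1) + \<theta> * \<epsilon> \<in> MP m1" by (rule MP_add[OF t1 t2])
  show ?thesis
  proof (cases "(\<theta> - 1) + \<theta> * \<epsilon> = 0")
    case True thus ?thesis using e(2) d by (simp add: ord_nz ord_0)
  next
    case False
    have "v (pi powi int m1) \<le> v ((\<theta> - 1) + \<theta> * \<epsilon>)" using MP_bound[OF X False] .
    moreover have "v (pi powi (int m1 - 1)) < v (pi powi int m1)" using vpowi_mono[of "int m1 - 1" "int m1"] by simp
    ultimately have "v (pi powi (int m1 - 1)) + v d < v d + v ((\<theta> - 1) + \<theta> * \<epsilon>)"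
      by (simp add: add.commute)
    thus ?thesis using e(2) d False by (simp add: ord_nz v_pd vmult)
  qed
qed

text \<open>Otherwise, with \<open>ord (\<theta> - 1) = i\<close>, \<open>t - c2 = u - d\<close> has order \<open>ord d + i\<close> and its
  \<open>Q_{n,m2}\<close>-coset is determined by that of \<open>d\<close>, so both cell conditions refer to \<open>c1\<close> only.\<close>
lemma middle_theta_apart:
  assumes m: "0 < m1" "0 < m2" and Mfine: "M = 2 * (m1 + m2)"
    and th: "\<theta> \<noteq> 0" "v \<theta> = v (pi powi j)" "1 - int m2 \<le> j"
    and th1: "\<theta> \<noteq> 1" "v (\<theta> - 1) = v (pi powi i)" "i \<le> int m1 - 1"
    and d: "d \<noteq> 0" and c: "congM M ((u / d) / \<theta>) 1"
  shows "ord (u - d) = ord (pi powi i * d) \<and> (u - d \<in> LQ l n m2 \<longleftrightarrow> d \<in> LQ (l / (\<theta> - 1)) n m2)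
    \<and> \<not> olt (ord (pi powi (int m1 - 1) * d)) (ord (u - d))"
proof -
  obtain \<epsilon> where e: "\<epsilon> \<in> MP M" "u - d = d * ((\<theta> - 1) + \<theta> * \<epsilon>)" using ud_decomp[OF th(1) d c] by blast
  have tnz: "\<theta> - 1 \<noteq> 0" using th1(1) by simp
  define \<eta> where "\<eta> = \<theta> * \<epsilon> / (\<theta> - 1)"
  have ud: "u - d = d * (\<theta> - 1) * (1 + \<eta>)" using e(2) tnz by (simp add: \<eta>_def field_simps)
  have eta: "\<eta> \<in> MP m2"
  proof (cases "\<epsilon> = 0")
    case True thus ?thesis by (simp add: \<eta>_def MP0)
  next
    case False
    have a: "v (pi powi (j + int M)) \<le> v (\<theta> * \<epsilon>)"
      using v_mult_bound[OF th(1) False _ MP_bound[OF e(1) False]] th(2) by simp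
    have te: "\<theta> * \<epsilon> \<noteq> 0" using th(1) False by simp
    have "v \<eta> = v (\<theta> * \<epsilon>) - v (pi powi i)" using te tnz th1(2) by (simp add: \<eta>_def vdiv)
    moreover have "v (pi powi (j + int M)) = v (pi powi (j + int M - i)) + v (pi powi i)"
      using vpowi[OF pi_nz, of "j + int M - i" i] by simp
    ultimately have "v (pi powi (j + int M - i)) \<le> v \<eta>" using a by (simp add: le_diff_eq)
    thus ?thesis by (rule MP_of_bound) (use th(3) th1(3) Mfine in simp)
  qed
  have un: "unit (1 + \<eta>)" by (rule one_plus_unit[OF eta m(2)])
  have dt: "d * (\<theta> - 1) \<noteq> 0" using d tnz by simp
  have o: "ord (u - d) = ord (pi powi i * d)"
    using un dt d tnz th1(2) unfolding ud by (simp add: ord_nz vmult v_pd unit_def add.commute)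
  have "u - d \<in> LQ l n m2 \<longleftrightarrow> d * (\<theta> - 1) \<in> LQ l n m2"
    unfolding ud by (rule LQ_transfer[OF Q_1plus[OF eta m(2)] m(2)])
  also have "\<dots> \<longleftrightarrow> d \<in> LQ (l / (\<theta> - 1)) n m2"
    using LQ_scale[OF tnz, of d "l / (\<theta> - 1)" n m2] tnz by (simp add: mult.commute)
  finally have lq: "u - d \<in> LQ l n m2 \<longleftrightarrow> d \<in> LQ (l / (\<theta> - 1)) n m2" .
  have "v (pi powi i * d) \<le> v (pi powi (int m1 - 1) * d)" using v_pd_mono[OF d th1(3)] .
  hence "\<not> olt (ord (pi powi (int m1 - 1) * d)) (ord (u - d))" using o d by (simp add: ord_nz)
  thus ?thesis using o lq by simp
qed

text \<open>A lower bound for \<open>ord (\<theta> - 1)\<close>, so that only finitely many \<open>i\<close> occur.\<close>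
lemma theta_lower: assumes "\<theta> \<noteq> 0" "\<theta> \<noteq> 1" "v \<theta> = v (pi powi j)" "1 - int m2 \<le> j"
  shows "v (pi powi (- int m2)) \<le> v (\<theta> - 1)"
proof -
  have a: "min (v \<theta>) (v 1) \<le> v (\<theta> - 1)" using vsub_min[of \<theta> 1] assms by simp
  have "v (pi powi (- int m2)) \<le> v (pi powi j)" using vpowi_mono_le[of "- int m2" j] assms by simp
  moreover have "v (pi powi (- int m2)) \<le> v 1" using vpowi_mono_le[of "- int m2" 0] by (simp add: v1)
  ultimately show ?thesis using a assms(3) by (simp add: min_def split: if_splits)
qed


end

section \<open>The intersection of two cells\<close>

context fqz begin

definition below_all :: "'k dpoly list \<Rightarrow> 'k dpoly \<Rightarrow> 'k list set" where
  "below_all Ls e = {x. \<forall>p\<in>set Ls. olt (ord (peval pi x p)) (ord (peval pi x e))}"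

definition above_all :: "'k dpoly list \<Rightarrow> 'k dpoly \<Rightarrow> 'k list set" where
  "above_all Us e = {x. \<forall>p\<in>set Us. olt (ord (peval pi x e)) (ord (peval pi x p))}"

lemma precell_below_all: "precell v pi k D \<Longrightarrow> \<forall>p\<in>set Ls. pwf k p \<Longrightarrow> pwf k e \<Longrightarrow> precell v pi k (D \<inter> below_all Ls e)"
proof (induction Ls arbitrary: D)
  case Nil thus ?case by (simp add: below_all_def)
next
  case (Cons p Ls)
  have "precell v pi k (D \<inter> {x. olt (ord (peval pi x p)) (ord (peval pi x e))})"
    using Cons.prems by (intro precell_cond cond_ord) auto
  hence "precell v pi k ((D \<inter> {x. olt (ord (peval pi x p)) (ord (peval pi x e))}) \<inter> below_all Ls e)"
    using Cons by simp
  moreover have "(D \<inter> {x. olt (ord (peval pi x p)) (ord (peval pi x e))}) \<inter> below_all Ls e = D \<inter> below_all (p # Ls) e"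
    by (auto simp: below_all_def)
  ultimately show ?case by simp
qed

lemma precell_above_all: "precell v pi k D \<Longrightarrow> \<forall>p\<in>set Us. pwf k p \<Longrightarrow> pwf k e \<Longrightarrow> precell v pi k (D \<inter> above_all Us e)"
proof (induction Us arbitrary: D)
  case Nil thus ?case by (simp add: above_all_def)
next
  case (Cons p Us)
  have "precell v pi k (D \<inter> {x. olt (ord (peval pi x e)) (ord (peval pi x p))})"
    using Cons.prems by (intro precell_cond cond_ord) auto
  hence "precell v pi k ((D \<inter> {x. olt (ord (peval pi x e)) (ord (peval pi x p))}) \<inter> above_all Us e)"
    using Cons by simp
  moreover have "(D \<inter> {x. olt (ord (peval pi x e)) (ord (peval pi x p))}) \<inter> above_all Us e = D \<inter> above_all (p # Us) e"
    by (auto simp: above_all_def)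
  ultimately show ?case by simp
qed

end

text \<open>Indices of the regions into which the fibres of \<open>K^{k+1}\<close> are cut: \<open>c1 = c2\<close>; near \<open>c2\<close>;
  near \<open>c1\<close>; far from both; and the middle annulus \<open>j\<close> with \<open>t - c1 \<in> \<mu> Q\<close>, \<open>c2 - c1 \<in> \<nu> Q\<close>.\<close>
datatype 'k region_idx = RCoinc | RNear2 | RNear1 | RFar | RMid int 'k 'k

locale two_cells = fqz v pi q for v :: "'k::field \<Rightarrow> 'g::linordered_ab_group_add" and pi q +
  fixes k :: nat and c1 c2 :: "'k center" and D1 D2 :: "'k list set" and L1 L2 U1 U2 :: "'k dpoly list"
    and l1 l2 :: 'k and n1 n2 m1 m2 :: nat
  assumes ok1: "gen_cell_ok k c1 D1 L1 U1 [(l1, n1, m1)]" and ok2: "gen_cell_ok k c2 D2 L2 U2 [(l2, n2, m2)]"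
begin

lemma c1: "cwf k c1" and c2: "cwf k c2" and pD1: "precell v pi k D1" and pD2: "precell v pi k D2"
  and wf: "\<forall>p\<in>set L1 \<union> set U1 \<union> set L2 \<union> set U2. pwf k p"
  and n1: "0 < n1" and m1: "0 < m1" and n2: "0 < n2" and m2: "0 < m2"
  using ok1 ok2 by (auto simp: gen_cell_ok_def)

definition cell1 where "cell1 = gen_cell c1 D1 L1 U1 [(l1, n1, m1)]"
definition cell2 where "cell2 = gen_cell c2 D2 L2 U2 [(l2, n2, m2)]"
definition gap where "gap x = ceval x c2 - ceval x c1"

text \<open>The precision used to classify the middle annuli.\<close>
definition Mfine where "Mfine = 2 * (m1 + m2)"

definition near_c2 where
  "near_c2 x t \<longleftrightarrow> olt (ord (pi powi (int m1 - 1) * gap x)) (ord (t - ceval x c2))"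
definition near_c1 where
  "near_c1 x t \<longleftrightarrow> olt (ord (pi powi (int m2 - 1) * gap x)) (ord (t - ceval x c1))"
definition far_c1 where
  "far_c1 x t \<longleftrightarrow> olt (ord (t - ceval x c1)) (ord (pi powi (1 - int m2) * gap x))"

definition mid_data where
  "mid_data j \<mu> \<nu> d u \<longleftrightarrow> d \<noteq> 0 \<and> slice j d u \<and> u \<in> LQ \<mu> 1 Mfine \<and> d \<in> LQ \<nu> 1 Mfine"

fun region :: "'k region_idx \<Rightarrow> ('k list \<times> 'k) set" where
  "region RCoinc = {(x, t). gap x = 0}"
| "region RNear2 = {(x, t). gap x \<noteq> 0 \<and> near_c2 x t}"
| "region RNear1 = {(x, t). gap x \<noteq> 0 \<and> near_c1 x t}"
| "region RFar = {(x, t). gap x \<noteq> 0 \<and> far_c1 x t}"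
| "region (RMid j \<mu> \<nu>) = {(x, t). \<not> near_c2 x t \<and> mid_data j \<mu> \<nu> (gap x) (t - ceval x c1)}"

definition region_index :: "'k set \<Rightarrow> 'k region_idx set" where
  "region_index R = {RCoinc, RNear2, RNear1, RFar} \<union>
     (\<lambda>(j, \<mu>, \<nu>). RMid j \<mu> \<nu>) ` ({1 - int m2 .. int m2 - 1} \<times> R \<times> R)"

definition Dboth where "Dboth = D1 \<inter> D2"
definition Dgap where "Dgap = Dboth \<inter> {x. \<not> ceval x c2 - ceval x c1 \<in> LQ 0 1 1}"
abbreviation gap0 where "gap0 \<equiv> diff_poly 0 pi c2 c1"

definition piece_coinc where
  "piece_coinc = gen_cell c1 (Dboth \<inter> {x. ceval x c2 - ceval x c1 \<in> LQ 0 1 1})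
     (L1 @ L2) (U1 @ U2) [(l1, n1, m1), (l2, n2, m2)]"
definition piece_near2 where
  "piece_near2 = gen_cell c2 (Dgap \<inter> {x. ceval x c2 - ceval x c1 \<in> LQ l1 n1 m1} \<inter> below_all L1 gap0 \<inter> above_all U1 gap0)
     (L2 @ [diff_poly (int m1 - 1) pi c2 c1]) U2 [(l2, n2, m2)]"
definition piece_near1 where
  "piece_near1 = gen_cell c1 (Dgap \<inter> {x. ceval x c1 - ceval x c2 \<in> LQ l2 n2 m2} \<inter> below_all L2 gap0 \<inter> above_all U2 gap0)
     (L1 @ [diff_poly (int m2 - 1) pi c2 c1]) U1 [(l1, n1, m1)]"
definition piece_far where
  "piece_far = gen_cell c1 Dgap (L1 @ L2) (U1 @ U2 @ [diff_poly (1 - int m2) pi c2 c1])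
     [(l1, n1, m1), (l2, n2, m2)]"
definition piece_mid where
  "piece_mid j \<mu> \<nu> \<theta> i = gen_cell c1 (Dgap \<inter> {x. ceval x c2 - ceval x c1 \<in> LQ \<nu> 1 Mfine}
      \<inter> {x. ceval x c2 - ceval x c1 \<in> LQ (l2 / (\<theta> - 1)) n2 m2}
      \<inter> below_all L2 (diff_poly i pi c2 c1) \<inter> above_all U2 (diff_poly i pi c2 c1))
     (L1 @ [diff_poly (j - 1) pi c2 c1]) (U1 @ [diff_poly (j + 1) pi c2 c1]) [(l1, n1, m1), (\<mu>, 1, Mfine)]"

lemma Mfine_pos: "0 < Mfine" using m1 by (simp add: Mfine_def)

lemma precell_Dboth: "precell v pi k Dboth"
  unfolding Dboth_def by (rule precell_inter[OF pD1 pD2])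

lemma precell_Dgap: "precell v pi k Dgap"
  unfolding Dgap_def by (rule precell_nQ[OF precell_Dboth c2 c1]) simp_all

lemma Dgap_iff: "x \<in> Dgap \<longleftrightarrow> x \<in> D1 \<and> x \<in> D2 \<and> gap x \<noteq> 0"
  by (simp add: Dgap_def Dboth_def gap_def LQ_0)

lemma gap_poly_wf: "pwf k (diff_poly j pi c2 c1)"
  by (rule diff_poly_wf[OF c2 c1])

lemma gap_poly_ord: "ord (peval pi x (diff_poly j pi c2 c1)) = ord (pi powi j * gap x)"
  by (simp add: diff_poly_ord gap_def)

lemma piece_coinc_decomp: "cell_decomp k {c1, c2} piece_coinc"
  unfolding piece_coinc_def using c1 c2 precell_Dboth wf n1 n2 m1 m2
  by (intro cell_decomp_mono[OF gen_cell_decomp]) (auto simp: gen_cell_ok_def intro: precell_Q)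

lemma piece_near2_decomp: "cell_decomp k {c1, c2} piece_near2"
  unfolding piece_near2_def using c1 c2 precell_Dgap wf n1 n2 m1 m2 gap_poly_wf
  by (intro cell_decomp_mono[OF gen_cell_decomp])
     (auto simp: gen_cell_ok_def intro!: precell_above_all precell_below_all precell_Q)

lemma piece_near1_decomp: "cell_decomp k {c1, c2} piece_near1"
  unfolding piece_near1_def using c1 c2 precell_Dgap wf n1 n2 m1 m2 gap_poly_wf
  by (intro cell_decomp_mono[OF gen_cell_decomp])
     (auto simp: gen_cell_ok_def intro!: precell_above_all precell_below_all precell_Q)

lemma piece_far_decomp: "cell_decomp k {c1, c2} piece_far"
  unfolding piece_far_def using c1 c2 precell_Dgap wf n1 n2 m1 m2 gap_poly_wf
  by (intro cell_decomp_mono[OF gen_cell_decomp]) (auto simp: gen_cell_ok_def)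

lemma piece_mid_decomp: "cell_decomp k {c1, c2} (piece_mid j \<mu> \<nu> \<theta> i)"
  unfolding piece_mid_def using c1 c2 precell_Dgap wf n1 n2 m1 m2 gap_poly_wf Mfine_pos
  by (intro cell_decomp_mono[OF gen_cell_decomp])
     (auto simp: gen_cell_ok_def intro!: precell_above_all precell_below_all precell_Q)

lemma inter_coinc: "cell1 \<inter> cell2 \<inter> region RCoinc = piece_coinc"
  by (auto simp: cell1_def cell2_def piece_coinc_def gen_cell_mem Dboth_def gap_def LQ_0)

lemma u_eq: "t - ceval x c2 + gap x = t - ceval x c1" by (simp add: gap_def)
lemma w_eq: "t - ceval x c1 - gap x = t - ceval x c2" by (simp add: gap_def)

lemma inter_near2: "cell1 \<inter> cell2 \<inter> region RNear2 = piece_near2"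
proof (rule set_eqI, clarify)
  fix x t
  show "(x, t) \<in> cell1 \<inter> cell2 \<inter> region RNear2 \<longleftrightarrow> (x, t) \<in> piece_near2"
  proof (cases "gap x \<noteq> 0 \<and> near_c2 x t")
    case True
    have N: "olt (ord (pi powi (int m1 - 1) * gap x)) (ord (t - ceval x c2))" using True by (simp add: near_c2_def)
    have k: "ord (t - ceval x c1) = ord (gap x)" "t - ceval x c1 \<in> LQ l1 n1 m1 \<longleftrightarrow> gap x \<in> LQ l1 n1 m1"
      using near2[OF _ m1 N, of l1 n1] True unfolding u_eq by auto
    show ?thesis 
      using True k N by (auto simp: cell1_def cell2_def piece_near2_def gen_cell_mem Dgap_iff below_all_def above_all_def gap_poly_ord gap_def[symmetric])
  next
    case False
    show ?thesis 
      using False by (auto simp: cell1_def cell2_def piece_near2_def gen_cell_mem Dgap_iff gap_poly_ord near_c2_def)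
  qed
qed

lemma inter_near1: "cell1 \<inter> cell2 \<inter> region RNear1 = piece_near1"
proof (rule set_eqI, clarify)
  fix x t
  show "(x, t) \<in> cell1 \<inter> cell2 \<inter> region RNear1 \<longleftrightarrow> (x, t) \<in> piece_near1"
  proof (cases "gap x \<noteq> 0 \<and> near_c1 x t")
    case True
    have N: "olt (ord (pi powi (int m2 - 1) * gap x)) (ord (t - ceval x c1))" using True by (simp add: near_c1_def)
    have k: "ord (t - ceval x c2) = ord (gap x)" "t - ceval x c2 \<in> LQ l2 n2 m2 \<longleftrightarrow> - gap x \<in> LQ l2 n2 m2"
      using near1[OF _ m2 N, of l2 n2] True unfolding w_eq by auto
    have md: "- gap x = ceval x c1 - ceval x c2" by (simp add: gap_def)
    show ?thesis 
      using True k N md by (auto simp: cell1_def cell2_def piece_near1_def gen_cell_mem Dgap_iff below_all_def above_all_def gap_poly_ord gap_def[symmetric])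
  next
    case False
    show ?thesis 
      using False by (auto simp: cell1_def cell2_def piece_near1_def gen_cell_mem Dgap_iff gap_poly_ord near_c1_def)
  qed
qed

lemma inter_far: "cell1 \<inter> cell2 \<inter> region RFar = piece_far"
proof (rule set_eqI, clarify)
  fix x t
  show "(x, t) \<in> cell1 \<inter> cell2 \<inter> region RFar \<longleftrightarrow> (x, t) \<in> piece_far"
  proof (cases "gap x \<noteq> 0 \<and> far_c1 x t")
    case True
    have N: "olt (ord (t - ceval x c1)) (ord (pi powi (1 - int m2) * gap x))" using True by (simp add: far_c1_def)
    have k: "ord (t - ceval x c2) = ord (t - ceval x c1)" "t - ceval x c2 \<in> LQ l2 n2 m2 \<longleftrightarrow> t - ceval x c1 \<in> LQ l2 n2 m2"
      using far[OF _ m2 N, of l2 n2] True unfolding w_eq by auto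
    show ?thesis 
      using True k N by (auto simp: cell1_def cell2_def piece_far_def gen_cell_mem Dgap_iff gap_poly_ord gap_def[symmetric])
  next
    case False
    show ?thesis 
      using False by (auto simp: cell1_def cell2_def piece_far_def gen_cell_mem Dgap_iff gap_poly_ord far_c1_def)
  qed
qed

text \<open>On a nonempty middle annulus, fix one of its points \<open>(d0, u0)\<close> and put \<open>\<theta> = u0 / d0\<close>.\<close>
lemma mid_ratio:
  assumes "mid_data j \<mu> \<nu> d0 u0"
  shows "u0 / d0 \<noteq> 0" "v (u0 / d0) = v (pi powi j)"
    and "\<And>d u. mid_data j \<mu> \<nu> d u \<Longrightarrow> congM Mfine ((u / d) / (u0 / d0)) 1"
proof -
  have g0: "d0 \<noteq> 0" "slice j d0 u0" "u0 \<in> LQ \<mu> 1 Mfine" "d0 \<in> LQ \<nu> 1 Mfine"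
    using assms by (auto simp: mid_data_def)
  have su0: "u0 \<noteq> 0" "v u0 = v (pi powi j * d0)" using slice_iff[OF g0(1)] g0(2) by auto
  show "u0 / d0 \<noteq> 0" "v (u0 / d0) = v (pi powi j)" using su0 g0 by (simp_all add: vdiv v_pd)
  show "congM Mfine ((u / d) / (u0 / d0)) 1" if "mid_data j \<mu> \<nu> d u" for d u
    using that theta_const[OF Mfine_pos _ _ _ _ g0] by (simp add: mid_data_def)
qed

lemma mid_region_empty:
  assumes d0: "mid_data j \<mu> \<nu> d0 u0" and j: "1 - int m2 \<le> j"
    and near: "u0 / d0 = 1 \<or> v (pi powi int m1) \<le> v (u0 / d0 - 1)"
  shows "region (RMid j \<mu> \<nu>) = {}"
proof (rule ccontr)
  assume "region (RMid j \<mu> \<nu>) \<noteq> {}"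
  then obtain x t where xt: "\<not> near_c2 x t" "mid_data j \<mu> \<nu> (gap x) (t - ceval x c1)" by auto
  have "olt (ord (pi powi (int m1 - 1) * gap x)) (ord (t - ceval x c1 - gap x))"
    using middle_theta_near_one[OF m1 m2 Mfine_def mid_ratio(1,2)[OF d0] j near _ mid_ratio(3)[OF d0 xt(2)]] xt(2)
    by (simp add: mid_data_def)
  thus False using xt(1) by (simp add: near_c2_def gap_def)
qed

lemma mid_region_piece:
  assumes d0: "mid_data j \<mu> \<nu> d0 u0" and j: "1 - int m2 \<le> j"
    and th1: "u0 / d0 \<noteq> 1" "v (u0 / d0 - 1) = v (pi powi i)" "i \<le> int m1 - 1"
  shows "cell1 \<inter> cell2 \<inter> region (RMid j \<mu> \<nu>) = piece_mid j \<mu> \<nu> (u0 / d0) i"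
proof (rule set_eqI, clarify)
  fix x t
  let ?\<theta> = "u0 / d0"
  show "(x, t) \<in> cell1 \<inter> cell2 \<inter> region (RMid j \<mu> \<nu>) \<longleftrightarrow> (x, t) \<in> piece_mid j \<mu> \<nu> ?\<theta> i"
  proof (cases "mid_data j \<mu> \<nu> (gap x) (t - ceval x c1)")
    case True
    have dnz: "gap x \<noteq> 0" using True by (simp add: mid_data_def)
    have "ord (t - ceval x c1 - gap x) = ord (pi powi i * gap x) \<and>
        (t - ceval x c1 - gap x \<in> LQ l2 n2 m2 \<longleftrightarrow> gap x \<in> LQ (l2 / (?\<theta> - 1)) n2 m2) \<and>
        \<not> olt (ord (pi powi (int m1 - 1) * gap x)) (ord (t - ceval x c1 - gap x))"
      by (rule middle_theta_apart[OF m1 m2 Mfine_def mid_ratio(1,2)[OF d0] j th1 dnz mid_ratio(3)[OF d0 True]])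
    hence k: "ord (t - ceval x c2) = ord (pi powi i * gap x)"
        "t - ceval x c2 \<in> LQ l2 n2 m2 \<longleftrightarrow> gap x \<in> LQ (l2 / (?\<theta> - 1)) n2 m2" "\<not> near_c2 x t"
      unfolding w_eq near_c2_def by auto
    show ?thesis using k True dnz
      by (auto simp: cell1_def cell2_def piece_mid_def gen_cell_mem Dgap_iff below_all_def above_all_def
          gap_poly_ord mid_data_def slice_def gap_def[symmetric])
  next
    case False
    thus ?thesis
      by (auto simp: piece_mid_def gen_cell_mem Dgap_iff gap_poly_ord mid_data_def slice_def gap_def[symmetric])
  qed
qed

lemma inter_mid:
  assumes j: "1 - int m2 \<le> j"
  shows "cell_decomp k {c1, c2} (cell1 \<inter> cell2 \<inter> region (RMid j \<mu> \<nu>))"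
proof (cases "\<exists>d u. mid_data j \<mu> \<nu> d u")
  case False
  hence "region (RMid j \<mu> \<nu>) = {}" by auto
  thus ?thesis using cell_decomp_empty by (simp del: region.simps)
next
  case True
  then obtain d0 u0 where d0: "mid_data j \<mu> \<nu> d0 u0" by blast
  let ?\<theta> = "u0 / d0"
  show ?thesis
  proof (cases "?\<theta> = 1 \<or> v (pi powi int m1) \<le> v (?\<theta> - 1)")
    case True
    thus ?thesis using mid_region_empty[OF d0 j] cell_decomp_empty by (simp del: region.simps)
  next
    case False
    hence th1: "?\<theta> \<noteq> 1" and lt: "v (?\<theta> - 1) < v (pi powi int m1)" by auto
    have "v (pi powi (- int m2)) \<le> v (?\<theta> - 1)"
      by (rule theta_lower[OF mid_ratio(1)[OF d0] th1 mid_ratio(2)[OF d0] j])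
    then obtain i where i: "i < int m1" "v (?\<theta> - 1) = v (pi powi i)"
      using value_is_pi_power[OF _ lt] by blast
    hence "i \<le> int m1 - 1" by simp
    show ?thesis unfolding mid_region_piece[OF d0 j th1 i(2) \<open>i \<le> int m1 - 1\<close>]
      by (rule piece_mid_decomp)
  qed
qed

lemma disj_near1_near2: "gap x \<noteq> 0 \<Longrightarrow> near_c1 x t \<Longrightarrow> near_c2 x t \<Longrightarrow> False"
  using near1_near2_disjoint[of "gap x" m1 m2 "t - ceval x c1"] m1 m2 by (simp add: near_c1_def near_c2_def w_eq)
lemma disj_far_near2: "gap x \<noteq> 0 \<Longrightarrow> far_c1 x t \<Longrightarrow> near_c2 x t \<Longrightarrow> False"
  using far_near2_disjoint[of "gap x" m1 m2 "t - ceval x c1"] m1 m2 by (simp add: far_c1_def near_c2_def w_eq)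
lemma disj_far_near1: "gap x \<noteq> 0 \<Longrightarrow> far_c1 x t \<Longrightarrow> near_c1 x t \<Longrightarrow> False"
  using far_near1_disjoint[of "gap x" m2 "t - ceval x c1"] m2 by (simp add: far_c1_def near_c1_def)
lemma disj_slice_near1: "gap x \<noteq> 0 \<Longrightarrow> j \<le> int m2 - 1 \<Longrightarrow> slice j (gap x) (t - ceval x c1) \<Longrightarrow> near_c1 x t \<Longrightarrow> False"
  using slice_near1_disjoint[of "gap x" j m2 "t - ceval x c1"] by (simp add: near_c1_def)
lemma disj_slice_far: "gap x \<noteq> 0 \<Longrightarrow> 1 - int m2 \<le> j \<Longrightarrow> slice j (gap x) (t - ceval x c1) \<Longrightarrow> far_c1 x t \<Longrightarrow> False"
  using slice_far_disjoint[of "gap x" m2 j "t - ceval x c1"] by (simp add: far_c1_def)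

lemma region_disjoint: assumes R: "\<forall>\<mu>\<in>R. \<forall>\<mu>'\<in>R. \<mu> \<noteq> \<mu>' \<longrightarrow> LQ \<mu> 1 Mfine \<inter> LQ \<mu>' 1 Mfine = {}"
  and i: "i \<in> region_index R" "i' \<in> region_index R" "i \<noteq> i'" shows "region i \<inter> region i' = {}"
proof (rule ccontr)
  assume "region i \<inter> region i' \<noteq> {}"
  then obtain x t where xt: "(x, t) \<in> region i" "(x, t) \<in> region i'" by auto
  have same_coset: "\<mu> = \<mu>'" if "\<mu> \<in> R" "\<mu>' \<in> R" "y \<in> LQ \<mu> 1 Mfine" "y \<in> LQ \<mu>' 1 Mfine" for \<mu> \<mu>' y
    using R that by blast
  have same_annulus: "j = j'" if "gap x \<noteq> 0" "slice j (gap x) (t - ceval x c1)" "slice j' (gap x) (t - ceval x c1)" for j j'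
    using slice_unique that by blast
  show False
  proof (cases i)
    case (RMid j \<mu> \<nu>)
    note iM = RMid
    have ji: "1 - int m2 \<le> j" "j \<le> int m2 - 1" "\<mu> \<in> R" "\<nu> \<in> R" using i(1) iM by (auto simp: region_index_def)
    show False
    proof (cases i')
      case (RMid j' \<mu>' \<nu>')
      have ji': "\<mu>' \<in> R" "\<nu>' \<in> R" using i(2) RMid by (auto simp: region_index_def)
      have "j = j'" using same_annulus xt iM RMid by (auto simp: mid_data_def)
      moreover have "\<mu> = \<mu>'" using same_coset[OF ji(3) ji'(1)] xt iM RMid by (auto simp: mid_data_def)
      moreover have "\<nu> = \<nu>'" using same_coset[OF ji(4) ji'(2)] xt iM RMid by (auto simp: mid_data_def)
      ultimately show False using i(3) iM RMid by simp
    qed (use xt iM ji disj_slice_near1 disj_slice_far in \<open>auto simp: mid_data_def\<close>)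
  next
    case RCoinc thus False using xt i(3) by (cases i') (auto simp: mid_data_def)
  next
    case RNear2 thus False using xt i(3) i(2) disj_near1_near2 disj_far_near2 by (cases i') (auto simp: region_index_def)
  next
    case RNear1 thus False using xt i(3) i(2) disj_near1_near2 disj_far_near1 disj_slice_near1 by (cases i') (auto simp: region_index_def mid_data_def)
  next
    case RFar thus False using xt i(3) i(2) disj_far_near2 disj_far_near1 disj_slice_far by (cases i') (auto simp: region_index_def mid_data_def)
  qed
qed

lemma region_cover: assumes R: "\<forall>y. \<exists>\<mu>\<in>R. y \<in> LQ \<mu> 1 Mfine" shows "\<exists>i\<in>region_index R. (x, t) \<in> region i"
proof (cases "gap x = 0")
  case True thus ?thesis by (intro bexI[of _ RCoinc]) (auto simp: region_index_def)
next
  case d: False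
  show ?thesis
  proof (cases "near_c2 x t")
    case True thus ?thesis using d by (intro bexI[of _ RNear2]) (auto simp: region_index_def)
  next
    case n2: False
    show ?thesis
    proof (cases "near_c1 x t")
      case True thus ?thesis using d by (intro bexI[of _ RNear1]) (auto simp: region_index_def)
    next
      case n1: False
      show ?thesis
      proof (cases "far_c1 x t")
        case True thus ?thesis using d by (intro bexI[of _ RFar]) (auto simp: region_index_def)
      next
        case nf: False
        obtain j where j: "1 - int m2 \<le> j" "j \<le> int m2 - 1" "slice j (gap x) (t - ceval x c1)"
          using slice_cover[OF d m2] n1 nf by (auto simp: near_c1_def far_c1_def)
        obtain \<mu> where \<mu>: "\<mu> \<in> R" "t - ceval x c1 \<in> LQ \<mu> 1 Mfine" using R by blast
        obtain \<nu> where \<nu>: "\<nu> \<in> R" "gap x \<in> LQ \<nu> 1 Mfine" using R by blast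
        have "RMid j \<mu> \<nu> \<in> region_index R" using j \<mu> \<nu> by (force simp: region_index_def)
        moreover have "(x, t) \<in> region (RMid j \<mu> \<nu>)" using d n2 j \<mu> \<nu> by (simp add: mid_data_def)
        ultimately show ?thesis by blast
      qed
    qed
  qed
qed


lemma inter_region_decomp:
  assumes "i \<in> region_index R" shows "cell_decomp k {c1, c2} (cell1 \<inter> cell2 \<inter> region i)"
proof (cases i)
  case (RMid j \<mu> \<nu>)
  hence "1 - int m2 \<le> j" using assms by (auto simp: region_index_def)
  thus ?thesis unfolding RMid by (rule inter_mid)
qed (simp_all only: inter_coinc inter_near2 inter_near1 inter_far piece_coinc_decomp
      piece_near2_decomp piece_near1_decomp piece_far_decomp)

theorem inter_decomp: "cell_decomp k {c1, c2} (cell1 \<inter> cell2)"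
proof -
  obtain R where R: "finite R" "\<forall>t. \<exists>\<mu>\<in>R. t \<in> LQ \<mu> 1 Mfine"
    "\<forall>\<mu>\<in>R. \<forall>\<mu>'\<in>R. \<mu> \<noteq> \<mu>' \<longrightarrow> LQ \<mu> 1 Mfine \<inter> LQ \<mu>' 1 Mfine = {}"
    using Q_coset_partition[OF zero_less_one Mfine_pos] by blast
  have "cell1 \<inter> cell2 = (\<Union>i\<in>region_index R. cell1 \<inter> cell2 \<inter> region i)"
  proof (rule set_eqI, clarify)
    fix x t
    obtain i where "i \<in> region_index R" "(x, t) \<in> region i" using region_cover[OF R(2)] by blast
    thus "(x, t) \<in> cell1 \<inter> cell2 \<longleftrightarrow> (x, t) \<in> (\<Union>i\<in>region_index R. cell1 \<inter> cell2 \<inter> region i)"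
      by blast
  qed
  moreover have "cell_decomp k {c1, c2} (\<Union>i\<in>region_index R. cell1 \<inter> cell2 \<inter> region i)"
  proof (rule cell_decomp_Union)
    show "finite (region_index R)" using R(1) by (simp add: region_index_def)
    show "cell_decomp k {c1, c2} (cell1 \<inter> cell2 \<inter> region i)" if "i \<in> region_index R" for i
      using that by (rule inter_region_decomp)
    show "cell1 \<inter> cell2 \<inter> region i \<inter> (cell1 \<inter> cell2 \<inter> region i') = {}"
      if "i \<in> region_index R" "i' \<in> region_index R" "i \<noteq> i'" for i i'
      using region_disjoint[OF R(3) that] by blast
  qed
  ultimately show ?thesis by simp
qed

end

context fqz begin

lemma cell_inter_decomp:
  assumes "is_cell v pi k A1 c1" "is_cell v pi k A2 c2"
  shows "cell_decomp k {c1, c2} (A1 \<inter> A2)"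
proof -
  obtain D1 L1 U1 l1 n1 m1 where A1: "gen_cell_ok k c1 D1 L1 U1 [(l1, n1, m1)]"
      "A1 = gen_cell c1 D1 L1 U1 [(l1, n1, m1)]"
    using cell_is_gen_cell[OF assms(1)] by blast
  obtain D2 L2 U2 l2 n2 m2 where A2: "gen_cell_ok k c2 D2 L2 U2 [(l2, n2, m2)]"
      "A2 = gen_cell c2 D2 L2 U2 [(l2, n2, m2)]"
    using cell_is_gen_cell[OF assms(2)] by blast
  interpret two_cells v pi q k c1 c2 D1 D2 L1 L2 U1 U2 l1 l2 n1 n2 m1 m2
    using A1(1) A2(1) by unfold_locales
  show ?thesis using inter_decomp unfolding cell1_def cell2_def A1(2) A2(2) .
qed

end

theorem proposition2p4:
  fixes v :: "'k::field \<Rightarrow> 'g::linordered_ab_group_add"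
    and pi :: 'k and q k :: nat
    and A1 A2 :: "('k list \<times> 'k) set" and c1 c2 :: "'k center"
  assumes "FqZ_field v pi q"
    and "is_cell v pi k A1 c1"
    and "is_cell v pi k A2 c2"
  shows "\<exists>F. finite F \<and> pairwise disjnt F \<and> \<Union>F = A1 \<inter> A2 \<and>
           (\<forall>C\<in>F. is_cell v pi k C c1 \<or> is_cell v pi k C c2)"
proof -
  interpret fqz v pi q by (rule fqz.intro) (rule assms(1))
  have "cell_decomp k {c1, c2} (A1 \<inter> A2)" by (rule cell_inter_decomp[OF assms(2,3)])
  then obtain F where F: "finite F" "pairwise disjnt F" "\<Union>F = A1 \<inter> A2"
      "\<forall>C\<in>F. \<exists>c\<in>{c1, c2}. is_cell v pi k C c"
    unfolding cell_decomp_def by blast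
  have "\<forall>C\<in>F. is_cell v pi k C c1 \<or> is_cell v pi k C c2" using F(4) by blast
  thus ?thesis using F(1-3) by blast
qed

end
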